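(* Let $\mathcal R$ be a super-algebra and let $M=(M^i_a)_{i\in I,a\in\widetilde I}$ be a family of homogeneous elements $M^i_a\in\mathcal R$ with parities $[M^i_a]=\bar k_i+\bar l_a$. The following are equivalent: (i) for all $s,t\in I$ and $c,d\in\widetilde I$, $\sum_{i,j\in I}\sum_{a,b\in\widetilde I}(-1)^{(\bar k_i+\bar l_a)\bar k_j}B^{st}_{ij}M^i_aM^j_b\widetilde S^{ab}_{cd}=0$ (equivalently, $BM^{(1)}M^{(2)}(1-\widetilde B)=0$ for the operator $M\colon\widetilde W\to W\otimes\mathcal R$, $M\widetilde e_a=\sum_ie_iM^i_a$); (ii) the assignment $f_M(x^i)=\sum_{a\in\widetilde I}M^i_a\widetilde x^a$ extends to a (unique) morphism of $\mathbb N_0$-graded super-algebras $f_M\colon\mathfrak X_B(\mathbb K)\to\mathfrak X_{\widetilde B}(\mathcal R)$; (iii) the assignment $f^M(\widetilde\psi_a)=\sum_{i\in I}\psi_iM^i_a$ extends to a (unique) morphism of $\mathbb N_0$-graded super-algebras $f^M\colon\Xi_{\widetilde B}(\mathbb K)\to\Xi_B(\mathcal R)$. (A matrix satisfying these conditions is called a $(B,\widetilde B)$-Manin matrix.)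
   Context: $\mathbb K$ is an infinite field, $\mathrm{char}\,\mathbb K\ne2$. Let $W,\widetilde W$ be finite-dimensional $\mathbb Z_2$-graded vector spaces with homogeneous bases $(e_i)_{i\in I}$, $(\widetilde e_a)_{a\in\widetilde I}$, parities $[e_i]=\bar k_i$, $[\widetilde e_a]=\bar l_a$. Let $B$ be an even idempotent operator on $W\otimes W$ with entries $B(e_i\otimes e_j)=\sum_{s,t\in I}B^{st}_{ij}e_s\otimes e_t$, $S=1-B$, $S^{st}_{ij}=\delta^s_i\delta^t_j-B^{st}_{ij}$; similarly $\widetilde B$ an even idempotent on $\widetilde W\otimes\widetilde W$ with entries $\widetilde B^{ab}_{cd}$ and $\widetilde S^{ab}_{cd}=\delta^a_c\delta^b_d-\widetilde B^{ab}_{cd}$. $\mathfrak X_B(\mathbb K)$ is the $\mathbb N_0$-graded super-algebra generated by degree-one $x^i$ ($i\in I$) of parity $\bar k_i$ with relations $\sum_{i,j}(-1)^{\bar k_i\bar k_j}B^{st}_{ij}x^ix^j=0$ ($s,t\in I$); $\Xi_B(\mathbb K)$ is generated by degree-one $\psi_i$ of parity $\bar k_i$ with relations $\sum_{s,t}S^{st}_{ij}\psi_s\psi_t=0$ ($i,j\in I$). Analogously $\mathfrak X_{\widetilde B}(\mathbb K)$, $\Xi_{\widetilde B}(\mathbb K)$ with generators $\widetilde x^a$, $\widetilde\psi_a$ of parity $\bar l_a$. For a super-algebra $\mathcal R$, $\mathfrak X_B(\mathcal R)=\mathcal R\otimes\mathfrak X_B(\mathbb K)$, $\Xi_B(\mathcal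 R)=\mathcal R\otimes\Xi_B(\mathbb K)$ (super tensor product of algebras, multiplication $(a\otimes b)(c\otimes d)=(-1)^{[b][c]}ac\otimes bd$, with $\mathcal R$ in degree 0; elements $r\otimes y$ written $ry$). In (i), $M^{(1)},M^{(2)}$ denote $M$ acting in the first/second tensor factor with Koszul signs; the entrywise form of the operator condition is exactly the displayed sum. *)

theory Defs
  imports Main "HOL-Library.Function_Algebras"
begin

text \<open>Parities are booleans (True = odd); addition of parities is (\<noteq>).\<close>

definition sgnb :: "bool \<Rightarrow> 'a::ring_1" where
  "sgnb b = (if b then -1 else 1)"

definition wpar :: "('g \<Rightarrow> bool) \<Rightarrow> 'g list \<Rightarrow> bool" where
  "wpar p w = odd (length (filter p w))"

definition homog :: "'r set \<Rightarrow> 'r set \<Rightarrow> bool \<Rightarrow> 'r \<Rightarrow> bool" where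
  "homog Ev Od b r = (if b then r \<in> Od else r \<in> Ev)"

text \<open>A (unital associative) super-algebra over the field 'k: a ring R with a central
  ring homomorphism sc : K -> R (the K-algebra structure) and a decomposition
  R = Ev (+) Od into K-subspaces with Ev Ev, Od Od \<subseteq> Ev and Ev Od, Od Ev \<subseteq> Od.\<close>
definition super_algebra :: "('k::field \<Rightarrow> 'r::ring_1) \<Rightarrow> 'r set \<Rightarrow> 'r set \<Rightarrow> bool" where
  "super_algebra sc Ev Od \<longleftrightarrow>
     sc 1 = 1 \<and> (\<forall>a b. sc (a + b) = sc a + sc b) \<and> (\<forall>a b. sc (a * b) = sc a * sc b) \<and>
     (\<forall>a r. sc a * r = r * sc a) \<and>
     0 \<in> Ev \<and> 0 \<in> Od \<and>
     (\<forall>x\<in>Ev. \<forall>y\<in>Ev. x + y \<in> Ev) \<and> (\<forall>x\<in>Od. \<forall>y\<in>Od. x + y \<in> Od) \<and>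
     (\<forall>c. \<forall>x\<in>Ev. sc c * x \<in> Ev) \<and> (\<forall>c. \<forall>x\<in>Od. sc c * x \<in> Od) \<and>
     (\<forall>r. \<exists>!p. fst p \<in> Ev \<and> snd p \<in> Od \<and> r = fst p + snd p) \<and>
     (\<forall>x\<in>Ev. \<forall>y\<in>Ev. x * y \<in> Ev) \<and> (\<forall>x\<in>Ev. \<forall>y\<in>Od. x * y \<in> Od) \<and>
     (\<forall>x\<in>Od. \<forall>y\<in>Ev. x * y \<in> Od) \<and> (\<forall>x\<in>Od. \<forall>y\<in>Od. x * y \<in> Ev)"

definition gaut :: "'r set \<Rightarrow> 'r set \<Rightarrow> 'r \<Rightarrow> 'r::ring_1" where
  "gaut Ev Od r = (THE s. \<exists>e\<in>Ev. \<exists>f\<in>Od. r = e + f \<and> s = e - f)"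

text \<open>Elements of R \<otimes> T(V) (super tensor product of R with the free super-algebra
  on generators of type 'g with parities p) are finitely supported maps
  'g list \<Rightarrow> R (coefficient of each word).\<close>

definition finsupp :: "('g list \<Rightarrow> 'r::zero) \<Rightarrow> bool" where
  "finsupp P \<longleftrightarrow> finite {w. P w \<noteq> 0}"

definition st_one :: "'g list \<Rightarrow> 'r::ring_1" where
  "st_one = (\<lambda>w. if w = [] then 1 else 0)"

definition st_gen :: "'g \<Rightarrow> 'g list \<Rightarrow> 'r::ring_1" where
  "st_gen g = (\<lambda>w. if w = [g] then 1 else 0)"

definition st_scal :: "'r \<Rightarrow> 'g list \<Rightarrow> 'r::ring_1" where
  "st_scal r = (\<lambda>w. if w = [] then r else 0)"

definition st_smul :: "('k \<Rightarrow> 'r::ring_1) \<Rightarrow> 'k \<Rightarrow> ('g list \<Rightarrow> 'r) \<Rightarrow> 'g list \<Rightarrow> 'r" where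
  "st_smul sc c P = (\<lambda>w. sc c * P w)"

text \<open>Multiplication (r \<otimes> u)(r' \<otimes> v) = (-1)^([u][r']) r r' \<otimes> uv, written with the
  parity automorphism \<sigma> of R.\<close>
definition st_mult :: "('r \<Rightarrow> 'r) \<Rightarrow> ('g \<Rightarrow> bool) \<Rightarrow> ('g list \<Rightarrow> 'r::ring_1)
    \<Rightarrow> ('g list \<Rightarrow> 'r) \<Rightarrow> 'g list \<Rightarrow> 'r" where
  "st_mult \<sigma> p P Q = (\<lambda>w. \<Sum>n\<le>length w. P (take n w) *
      (if wpar p (take n w) then \<sigma> (Q (drop n w)) else Q (drop n w)))"

inductive_set st_ideal :: "('r \<Rightarrow> 'r) \<Rightarrow> ('g \<Rightarrow> bool) \<Rightarrow> ('g list \<Rightarrow> 'r::ring_1) set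
    \<Rightarrow> ('g list \<Rightarrow> 'r) set"
  for \<sigma> p G where
  gen: "q \<in> G \<Longrightarrow> q \<in> st_ideal \<sigma> p G"
| zero: "0 \<in> st_ideal \<sigma> p G"
| add: "x \<in> st_ideal \<sigma> p G \<Longrightarrow> y \<in> st_ideal \<sigma> p G \<Longrightarrow> x + y \<in> st_ideal \<sigma> p G"
| lmult: "finsupp a \<Longrightarrow> x \<in> st_ideal \<sigma> p G \<Longrightarrow> st_mult \<sigma> p a x \<in> st_ideal \<sigma> p G"
| rmult: "finsupp a \<Longrightarrow> x \<in> st_ideal \<sigma> p G \<Longrightarrow> st_mult \<sigma> p x a \<in> st_ideal \<sigma> p G"

text \<open>Entries B s t i j = B^{st}_{ij}.  Even idempotent operator on W \<otimes> W.\<close>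
definition even_idempotent :: "('g::finite \<Rightarrow> bool) \<Rightarrow> ('g \<Rightarrow> 'g \<Rightarrow> 'g \<Rightarrow> 'g \<Rightarrow> 'k::field) \<Rightarrow> bool" where
  "even_idempotent p B \<longleftrightarrow>
     (\<forall>s t i j. (\<Sum>u\<in>UNIV. \<Sum>v\<in>UNIV. B s t u v * B u v i j) = B s t i j) \<and>
     (\<forall>s t i j. B s t i j \<noteq> 0 \<longrightarrow> (p s \<noteq> p t) = (p i \<noteq> p j))"

definition Sop :: "('g \<Rightarrow> 'g \<Rightarrow> 'g \<Rightarrow> 'g \<Rightarrow> 'k::field) \<Rightarrow> 'g \<Rightarrow> 'g \<Rightarrow> 'g \<Rightarrow> 'g \<Rightarrow> 'k" where
  "Sop B s t i j = (if s = i \<and> t = j then 1 else 0) - B s t i j"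

definition X_rels :: "('k::field \<Rightarrow> 'r::ring_1) \<Rightarrow> ('r \<Rightarrow> 'r) \<Rightarrow> ('g::finite \<Rightarrow> bool)
    \<Rightarrow> ('g \<Rightarrow> 'g \<Rightarrow> 'g \<Rightarrow> 'g \<Rightarrow> 'k) \<Rightarrow> ('g list \<Rightarrow> 'r) set" where
  "X_rels sc \<sigma> p B = range (\<lambda>(s, t). \<Sum>i\<in>UNIV. \<Sum>j\<in>UNIV.
      st_smul sc (sgnb (p i \<and> p j) * B s t i j) (st_mult \<sigma> p (st_gen i) (st_gen j)))"

definition Xi_rels :: "('k::field \<Rightarrow> 'r::ring_1) \<Rightarrow> ('r \<Rightarrow> 'r) \<Rightarrow> ('g::finite \<Rightarrow> bool)
    \<Rightarrow> ('g \<Rightarrow> 'g \<Rightarrow> 'g \<Rightarrow> 'g \<Rightarrow> 'k) \<Rightarrow> ('g list \<Rightarrow> 'r) set" where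
  "Xi_rels sc \<sigma> p B = range (\<lambda>(i, j). \<Sum>s\<in>UNIV. \<Sum>t\<in>UNIV.
      st_smul sc (Sop B s t i j) (st_mult \<sigma> p (st_gen s) (st_gen t)))"

text \<open>A morphism of N0-graded super-algebras  K \<otimes> T(V1) / J1  \<rightarrow>  R \<otimes> T(V2) / J2,
  represented by a map F on representatives that respects the congruences and is a
  K-algebra homomorphism preserving degree and parity modulo J2.  The source has
  coefficients in K (purely even), so its parity automorphism is the identity.\<close>
definition qa_morphism ::
  "('g1 \<Rightarrow> bool) \<Rightarrow> ('g1 list \<Rightarrow> 'k::field) set \<Rightarrow>
   ('k \<Rightarrow> 'r::ring_1) \<Rightarrow> 'r set \<Rightarrow> 'r set \<Rightarrow> ('g2 \<Rightarrow> bool) \<Rightarrow> ('g2 list \<Rightarrow> 'r) set \<Rightarrow>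
   (('g1 list \<Rightarrow> 'k) \<Rightarrow> ('g2 list \<Rightarrow> 'r)) \<Rightarrow> bool" where
  "qa_morphism p1 J1 sc Ev Od p2 J2 F \<longleftrightarrow>
     (\<forall>P. finsupp P \<longrightarrow> finsupp (F P)) \<and>
     (\<forall>P Q. finsupp P \<and> finsupp Q \<and> P - Q \<in> J1 \<longrightarrow> F P - F Q \<in> J2) \<and>
     (\<forall>P Q. finsupp P \<and> finsupp Q \<longrightarrow> F (P + Q) - (F P + F Q) \<in> J2) \<and>
     (\<forall>c P. finsupp P \<longrightarrow> F (st_smul id c P) - st_smul sc c (F P) \<in> J2) \<and>
     (\<forall>P Q. finsupp P \<and> finsupp Q \<longrightarrow>
        F (st_mult id p1 P Q) - st_mult (gaut Ev Od) p2 (F P) (F Q) \<in> J2) \<and>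
     F st_one - st_one \<in> J2 \<and>
     (\<forall>P n. finsupp P \<and> (\<forall>w. P w \<noteq> 0 \<longrightarrow> length w = n) \<longrightarrow>
        (\<exists>Q. finsupp Q \<and> F P - Q \<in> J2 \<and> (\<forall>w. Q w \<noteq> 0 \<longrightarrow> length w = n))) \<and>
     (\<forall>P b. finsupp P \<and> (\<forall>w. P w \<noteq> 0 \<longrightarrow> wpar p1 w = b) \<longrightarrow>
        (\<exists>Q. finsupp Q \<and> F P - Q \<in> J2 \<and> (\<forall>w. homog Ev Od (b \<noteq> wpar p2 w) (Q w))))"

end

theory Submission
  imports Defs
begin

text \<open>Both algebras are quadratic, so a morphism out of them is determined by the images of the
  generators and exists iff the images of the defining relations lie in the target ideal. For the
  substitution \<open>x\<^sup>i \<mapsto> \<Sum>\<^sub>a M\<^sup>i\<^sub>a x\<^sup>~\<^sup>a\<close> (resp. \<open>\<psi>\<^sup>~\<^sub>a \<mapsto> \<Sum>\<^sub>i \<psi>\<^sub>i M\<^sup>i\<^sub>a\<close>) these images are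
  homogeneous of degree 2, with coefficient matrix \<open>B M\<^sup>(\<^sup>1\<^sup>) M\<^sup>(\<^sup>2\<^sup>)\<close> (resp.
  \<open>M\<^sup>(\<^sup>1\<^sup>) M\<^sup>(\<^sup>2\<^sup>) (1 - B\<^sup>~)\<close>), up to signs. In degree 2 the target ideal is spanned by the
  rows of \<open>B\<^sup>~\<close> (resp. \<open>1 - B\<close>), i.e. it is the kernel of the complementary idempotent
  \<open>1 - B\<^sup>~\<close> (resp. \<open>B\<close>). Either way, membership means that
  \<open>B M\<^sup>(\<^sup>1\<^sup>) M\<^sup>(\<^sup>2\<^sup>) (1 - B\<^sup>~)\<close> vanishes.\<close>

lemma sum_eq_single:
  assumes "finite A" "a \<in> A" "\<And>i. i \<in> A \<Longrightarrow> i \<noteq> a \<Longrightarrow> g i = 0"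
  shows "sum g A = g a"
proof -
  have "sum g A = g a + sum g (A - {a})" using assms by (simp add: sum.remove)
  also have "sum g (A - {a}) = 0" using assms by (intro sum.neutral) auto
  finally show ?thesis by simp
qed

lemma sum_delta2:
  assumes "finite A" "finite B" "c \<in> A" "d \<in> B"
  shows "(\<Sum>a\<in>A. \<Sum>b\<in>B. if a = c \<and> b = d then f a b else 0) = (f c d :: 'r::comm_monoid_add)"
proof -
  have "\<And>a. (\<Sum>b\<in>B. if a = c \<and> b = d then f a b else 0) = (if a = c then f a d else 0)"
    using assms by (simp add: sum.delta')
  then show ?thesis using assms by (simp add: sum.delta')
qed

lemma sum_fun_apply: "(sum f S) w = sum (\<lambda>x. f x w) S"
  by (induction S rule: infinite_finite_induct) auto

lemma length_eq_2_iff: "length w = 2 \<longleftrightarrow> (\<exists>c d. w = [c, d])"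
  by (auto simp: numeral_2_eq_2 length_Suc_conv)

lemma sgnb_simps [simp]: "sgnb True = -1" "sgnb False = 1"
  by (simp_all add: sgnb_def)

lemma wpar_Nil [simp]: "wpar p [] = False"
  by (simp add: wpar_def)

lemma wpar_Cons [simp]: "wpar p (x # w) = (p x \<noteq> wpar p w)"
  by (simp add: wpar_def)

lemma Sop_parity:
  assumes "even_idempotent p B" "Sop B a b c d \<noteq> 0"
  shows "(p a \<noteq> p b) = (p c \<noteq> p d)"
proof (cases "a = c \<and> b = d")
  case False
  then have "B a b c d \<noteq> 0" using assms(2) by (auto simp: Sop_def)
  then show ?thesis using assms(1) unfolding even_idempotent_def by blast
qed auto

lemma even_idempotent_mult_Sop:
  assumes "even_idempotent p B"
  shows "(\<Sum>a\<in>UNIV. \<Sum>b\<in>UNIV. B x y a b * Sop B a b c d) = 0"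
proof -
  have "\<And>a b. B x y a b * Sop B a b c d
      = (if a = c \<and> b = d then B x y a b else 0) - B x y a b * B a b c d"
    by (simp add: Sop_def right_diff_distrib)
  then have "(\<Sum>a\<in>UNIV. \<Sum>b\<in>UNIV. B x y a b * Sop B a b c d)
      = B x y c d - (\<Sum>a\<in>UNIV. \<Sum>b\<in>UNIV. B x y a b * B a b c d)"
    by (simp add: sum_subtractf sum_delta2)
  then show ?thesis using assms unfolding even_idempotent_def by simp
qed

lemma finsupp_zero [simp]: "finsupp (0 :: 'g list \<Rightarrow> 'r::zero)"
  by (simp add: finsupp_def)

lemma finsupp_add:
  "finsupp P \<Longrightarrow> finsupp Q \<Longrightarrow> finsupp (P + Q :: 'g list \<Rightarrow> 'r::monoid_add)"
  unfolding finsupp_def by (rule finite_subset[of _ "{w. P w \<noteq> 0} \<union> {w. Q w \<noteq> 0}"]) auto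

lemma finsupp_sum:
  "(\<And>x. x \<in> S \<Longrightarrow> finsupp (f x)) \<Longrightarrow> finsupp (sum f S :: 'g list \<Rightarrow> 'r::comm_monoid_add)"
  by (induction S rule: infinite_finite_induct) (auto intro: finsupp_add)

lemma finsupp_scale: "finsupp P \<Longrightarrow> finsupp (\<lambda>w. r * P w :: 'r::ring_1)"
  unfolding finsupp_def by (rule finite_subset[of _ "{w. P w \<noteq> 0}"]) auto

lemma finsupp_length_le:
  "finite (UNIV :: 'g set) \<Longrightarrow> (\<And>w. P w \<noteq> 0 \<Longrightarrow> length w \<le> n) \<Longrightarrow> finsupp (P :: 'g list \<Rightarrow> 'r::zero)"
  unfolding finsupp_def by (rule finite_subset[OF _ finite_lists_length_le[of UNIV n]]) auto

definition st_word :: "'g list \<Rightarrow> 'g list \<Rightarrow> 'r::ring_1" where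
  "st_word u = (\<lambda>w. if w = u then 1 else 0)"

lemma st_gen_eq_st_word: "st_gen g = st_word [g]"
  by (simp add: st_gen_def st_word_def)

lemma st_one_eq_st_word: "st_one = st_word []"
  by (simp add: st_one_def st_word_def)

lemma finsupp_st_word [simp]: "finsupp (st_word u)"
  unfolding finsupp_def st_word_def by (rule finite_subset[of _ "{u}"]) auto

lemma finsupp_st_scal [simp]: "finsupp (st_scal r)"
  unfolding finsupp_def st_scal_def by (rule finite_subset[of _ "{[]}"]) auto

lemma finsupp_st_gen [simp]: "finsupp (st_gen g)"
  by (simp add: st_gen_eq_st_word)

lemma finsupp_eq_sum_st_word:
  assumes "finite S" "{w. P w \<noteq> 0} \<subseteq> S"
  shows "P = (\<Sum>u\<in>S. (\<lambda>w. P u * st_word u w))"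
proof
  fix w show "P w = (\<Sum>u\<in>S. (\<lambda>w. P u * st_word u w)) w"
  proof (cases "w \<in> S")
    case True then show ?thesis unfolding sum_fun_apply
      by (subst sum_eq_single[OF assms(1) True]) (auto simp: st_word_def)
  next
    case False then have "P w = 0" using assms by auto
    then show ?thesis using False unfolding sum_fun_apply by (auto simp: st_word_def intro!: sum.neutral)
  qed
qed

section \<open>The twisted multiplication of \<open>R \<otimes> T(V)\<close>\<close>

definition degree_one :: "('g list \<Rightarrow> 'r::zero) \<Rightarrow> bool" where
  "degree_one Z \<longleftrightarrow> (\<forall>w. length w \<noteq> 1 \<longrightarrow> Z w = 0)"

lemma degree_one_st_gen: "degree_one (st_gen g)"
  by (simp add: degree_one_def st_gen_def)

locale involutive_automorphism =
  fixes \<sigma> :: "'r::ring_1 \<Rightarrow> 'r"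
  assumes add: "\<sigma> (x + y) = \<sigma> x + \<sigma> y"
    and mult: "\<sigma> (x * y) = \<sigma> x * \<sigma> y"
    and involutive: "\<sigma> (\<sigma> x) = x"
    and one: "\<sigma> 1 = 1"
begin

lemma zero [simp]: "\<sigma> 0 = 0"
  using add[of 0 0] by simp

lemma uminus: "\<sigma> (- x) = - \<sigma> x"
  using add[of x "-x"] by (intro minus_unique[symmetric]) simp

lemma diff: "\<sigma> (x - y) = \<sigma> x - \<sigma> y"
  using add[of x "-y"] uminus[of y] by simp

lemma sum: "\<sigma> (sum f A) = (\<Sum>x\<in>A. \<sigma> (f x))"
  by (induction A rule: infinite_finite_induct) (auto simp: add)

definition twist :: "bool \<Rightarrow> 'r \<Rightarrow> 'r" where
  "twist b x = (if b then \<sigma> x else x)"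

lemma twist_simps [simp]: "twist b 0 = 0" "twist b 1 = 1" "twist False x = x" "twist True x = \<sigma> x"
  by (auto simp: twist_def one)

lemma twist_add: "twist b (x + y) = twist b x + twist b y"
  by (simp add: twist_def add)

lemma twist_mult: "twist b (x * y) = twist b x * twist b y"
  by (simp add: twist_def mult)

lemma twist_diff: "twist b (x - y) = twist b x - twist b y"
  by (simp add: twist_def diff)

lemma twist_sum: "twist b (sum f A) = (\<Sum>x\<in>A. twist b (f x))"
  by (simp add: twist_def sum)

lemma twist_twist: "twist b (twist c x) = twist (b \<noteq> c) x"
  by (simp add: twist_def involutive)

lemma st_mult_apply:
  "st_mult \<sigma> p P Q w = (\<Sum>n\<le>length w. P (take n w) * twist (wpar p (take n w)) (Q (drop n w)))"
  by (simp add: st_mult_def twist_def)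

lemma st_mult_Nil [simp]: "st_mult \<sigma> p P Q [] = P [] * Q []"
  by (simp add: st_mult_apply)

lemma st_mult_Cons: "st_mult \<sigma> p P Q (c # w) =
   P [] * Q (c # w) + (\<Sum>n\<le>length w. P (c # take n w) * twist (p c \<noteq> wpar p (take n w)) (Q (drop n w)))"
  unfolding st_mult_apply length_Cons sum.atMost_Suc_shift by simp

lemma st_mult_length1: "st_mult \<sigma> p P Q [a] = P [] * Q [a] + P [a] * twist (p a) (Q [])"
  by (simp add: st_mult_Cons)

lemma st_mult_length2: "st_mult \<sigma> p P Q [a, b] =
    P [] * Q [a, b] + P [a] * twist (p a) (Q [b]) + P [a, b] * twist (p a \<noteq> p b) (Q [])"
  by (simp add: st_mult_Cons atMost_Suc add.assoc)

lemma st_mult_st_scal_left: "st_mult \<sigma> p (st_scal r) Q = (\<lambda>w. r * Q w)"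
proof
  fix w show "st_mult \<sigma> p (st_scal r) Q w = r * Q w"
    by (cases w) (simp_all add: st_mult_Cons st_scal_def)
qed

lemma st_mult_st_one_left: "st_mult \<sigma> p st_one Q = Q"
  using st_mult_st_scal_left[of p 1 Q] by (simp add: st_one_def st_scal_def)

lemma st_mult_st_one_right: "st_mult \<sigma> p P st_one = P"
proof
  fix w
  have "st_mult \<sigma> p P st_one w
      = P (take (length w) w) * twist (wpar p (take (length w) w)) (st_one (drop (length w) w))"
    unfolding st_mult_apply by (rule sum_eq_single) (auto simp: st_one_def)
  then show "st_mult \<sigma> p P st_one w = P w" by (simp add: st_one_def)
qed

lemma st_mult_add_left: "st_mult \<sigma> p (P + Q) R = st_mult \<sigma> p P R + st_mult \<sigma> p Q R"
  by (rule ext) (simp add: st_mult_apply distrib_right sum.distrib)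

lemma st_mult_add_right: "st_mult \<sigma> p R (P + Q) = st_mult \<sigma> p R P + st_mult \<sigma> p R Q"
  by (rule ext) (simp add: st_mult_apply twist_add distrib_left sum.distrib)

lemma st_mult_diff_left: "st_mult \<sigma> p (P - Q) R = st_mult \<sigma> p P R - st_mult \<sigma> p Q R"
  by (rule ext) (simp add: st_mult_apply left_diff_distrib sum_subtractf)

lemma st_mult_diff_right: "st_mult \<sigma> p R (P - Q) = st_mult \<sigma> p R P - st_mult \<sigma> p R Q"
  by (rule ext) (simp add: st_mult_apply twist_diff right_diff_distrib sum_subtractf)

lemma st_mult_sum_left: "st_mult \<sigma> p (sum f S) R = (\<Sum>x\<in>S. st_mult \<sigma> p (f x) R)"
proof (induction S rule: infinite_finite_induct)
  case (insert x F)
  then show ?case by (simp only: sum.insert[OF insert(1,2)] st_mult_add_left insert(3))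
qed (simp_all add: st_mult_apply)

lemma st_mult_sum_right: "st_mult \<sigma> p R (sum f S) = (\<Sum>x\<in>S. st_mult \<sigma> p R (f x))"
proof (induction S rule: infinite_finite_induct)
  case (insert x F)
  then show ?case by (simp only: sum.insert[OF insert(1,2)] st_mult_add_right insert(3))
qed (simp_all add: st_mult_apply)

lemma st_mult_scale_left: "st_mult \<sigma> p (\<lambda>w. r * P w) Q = (\<lambda>w. r * st_mult \<sigma> p P Q w)"
  by (rule ext) (simp add: st_mult_apply sum_distrib_left mult.assoc)

lemma st_mult_scale_right:
  assumes "\<And>x. s * x = x * s" "\<sigma> s = s"
  shows "st_mult \<sigma> p P (\<lambda>w. s * Q w) = (\<lambda>w. s * st_mult \<sigma> p P Q w)"
proof (rule ext)
  fix w
  have "\<And>b x. twist b (s * x) = s * twist b x" using assms by (simp add: twist_def mult)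
  moreover have "\<And>x y. x * (s * y) = s * (x * y)" by (metis assms(1) mult.assoc)
  ultimately show "st_mult \<sigma> p P (\<lambda>w. s * Q w) w = s * st_mult \<sigma> p P Q w"
    by (simp add: st_mult_apply sum_distrib_left)
qed

lemma finsupp_st_mult:
  assumes "finsupp P" "finsupp Q"
  shows "finsupp (st_mult \<sigma> p P Q)"
  unfolding finsupp_def
proof (rule finite_subset)
  show "{w. st_mult \<sigma> p P Q w \<noteq> 0} \<subseteq> (\<lambda>(u, v). u @ v) ` ({u. P u \<noteq> 0} \<times> {v. Q v \<noteq> 0})"
  proof
    fix w assume "w \<in> {w. st_mult \<sigma> p P Q w \<noteq> 0}"
    then have "(\<Sum>n\<le>length w. P (take n w) * twist (wpar p (take n w)) (Q (drop n w))) \<noteq> 0"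
      by (simp add: st_mult_apply)
    then obtain n where "P (take n w) * twist (wpar p (take n w)) (Q (drop n w)) \<noteq> 0"
      by (meson sum.not_neutral_contains_not_neutral)
    then have "P (take n w) \<noteq> 0" "Q (drop n w) \<noteq> 0" by auto
    then show "w \<in> (\<lambda>(u, v). u @ v) ` ({u. P u \<noteq> 0} \<times> {v. Q v \<noteq> 0})"
      by (intro image_eqI[of _ _ "(take n w, drop n w)"]) auto
  qed
  show "finite ((\<lambda>(u, v). u @ v) ` ({u. P u \<noteq> 0} \<times> {v. Q v \<noteq> 0}))"
    using assms by (auto simp: finsupp_def)
qed

lemma st_mult_st_word: "st_mult \<sigma> p (st_word u) (st_word v) = st_word (u @ v)"
proof
  fix w show "st_mult \<sigma> p (st_word u) (st_word v) w = st_word (u @ v) w"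
  proof (cases "w = u @ v")
    case True
    have "take n w \<noteq> u" if "n \<le> length w" "n \<noteq> length u" for n
    proof
      assume "take n w = u"
      then have "length (take n w) = length u" by simp
      then show False using that by simp
    qed
    then show ?thesis unfolding st_mult_apply
      by (subst sum_eq_single[of _ "length u"]) (auto simp: st_word_def True)
  next
    case False
    then show ?thesis unfolding st_mult_apply by (auto simp: st_word_def intro!: sum.neutral)
  qed
qed

lemma st_mult_degree_one_Nil: "degree_one Z \<Longrightarrow> st_mult \<sigma> p Z Q [] = 0"
  by (simp add: degree_one_def)

lemma st_mult_degree_one_Cons:
  assumes "degree_one Z"
  shows "st_mult \<sigma> p Z Q (c # w) = Z [c] * twist (p c) (Q w)"
proof -
  have "(\<Sum>n\<le>length w. Z (c # take n w) * twist (p c \<noteq> wpar p (take n w)) (Q (drop n w)))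
     = Z [c] * twist (p c) (Q w)"
    by (subst sum_eq_single[of _ 0]) (use assms in \<open>auto simp: degree_one_def\<close>)
  then show ?thesis using assms by (simp add: st_mult_Cons degree_one_def)
qed

lemma st_mult_assoc_degree_one:
  assumes "degree_one Z"
  shows "st_mult \<sigma> p Z (st_mult \<sigma> p A B) = st_mult \<sigma> p (st_mult \<sigma> p Z A) B"
proof
  fix w show "st_mult \<sigma> p Z (st_mult \<sigma> p A B) w = st_mult \<sigma> p (st_mult \<sigma> p Z A) B w"
  proof (cases w)
    case Nil then show ?thesis using assms by (simp add: st_mult_degree_one_Nil mult.assoc)
  next
    case (Cons c v)
    have "st_mult \<sigma> p Z (st_mult \<sigma> p A B) w = Z [c] * twist (p c) (st_mult \<sigma> p A B v)"
      using assms Cons by (simp add: st_mult_degree_one_Cons)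
    also have "\<dots> = (\<Sum>n\<le>length v. Z [c] * (twist (p c) (A (take n v))
        * twist (p c \<noteq> wpar p (take n v)) (B (drop n v))))"
      by (simp add: st_mult_apply twist_sum twist_mult twist_twist sum_distrib_left)
    also have "\<dots> = st_mult \<sigma> p (st_mult \<sigma> p Z A) B w"
      unfolding Cons st_mult_Cons[of p "st_mult \<sigma> p Z A" B c v] using assms
      by (simp add: st_mult_degree_one_Nil st_mult_degree_one_Cons mult.assoc degree_one_def)
    finally show ?thesis .
  qed
qed

lemma st_mult_st_gen_st_gen: "st_mult \<sigma> p (st_gen a) (st_gen b) = st_word [a, b]"
proof
  fix w show "st_mult \<sigma> p (st_gen a) (st_gen b) w = st_word [a, b] w"
  proof (cases w)
    case (Cons c v)
    then show ?thesis
      unfolding Cons st_mult_degree_one_Cons[OF degree_one_st_gen] by (auto simp: st_gen_def st_word_def)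
  qed (simp add: st_gen_def st_word_def)
qed

end

interpretation id_automorphism: involutive_automorphism id
  by unfold_locales simp_all

section \<open>Two-sided ideals of \<open>R \<otimes> T(V)\<close>\<close>

lemma st_ideal_diff_trans:
  "x - y \<in> st_ideal \<sigma> p G \<Longrightarrow> y - z \<in> st_ideal \<sigma> p G \<Longrightarrow> x - z \<in> st_ideal \<sigma> p G"
  using st_ideal.add[of "x - y" \<sigma> p G "y - z"] by simp

context involutive_automorphism
begin

lemma st_ideal_scale: "x \<in> st_ideal \<sigma> p G \<Longrightarrow> (\<lambda>w. r * x w) \<in> st_ideal \<sigma> p G"
  using st_ideal.lmult[of "st_scal r" x \<sigma> p G] by (simp add: st_mult_st_scal_left)

lemma st_ideal_diff:
  assumes "x \<in> st_ideal \<sigma> p G" "y \<in> st_ideal \<sigma> p G"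
  shows "x - y \<in> st_ideal \<sigma> p G"
proof -
  have "x - y = x + (\<lambda>w. (- 1) * y w)" by (rule ext) simp
  then show ?thesis using assms by (simp only:) (intro st_ideal.add st_ideal_scale)
qed

lemma st_ideal_sum: "(\<And>u. u \<in> S \<Longrightarrow> f u \<in> st_ideal \<sigma> p G) \<Longrightarrow> sum f S \<in> st_ideal \<sigma> p G"
  by (induction S rule: infinite_finite_induct) (auto intro: st_ideal.zero st_ideal.add)

lemma st_ideal_diff_sum:
  "(\<And>x. x \<in> A \<Longrightarrow> f x - g x \<in> st_ideal \<sigma> p G) \<Longrightarrow> sum f A - sum g A \<in> st_ideal \<sigma> p G"
  unfolding sum_subtractf[symmetric] by (rule st_ideal_sum)

lemma st_ideal_diff_st_smul:
  "x - y \<in> st_ideal \<sigma> p G \<Longrightarrow> st_smul sc c x - st_smul sc c y \<in> st_ideal \<sigma> p G"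
  using st_ideal_scale[of "x - y" p G "sc c"] by (simp add: st_smul_def right_diff_distrib fun_diff_def)

lemma st_ideal_diff_st_mult:
  assumes "x - x' \<in> st_ideal \<sigma> p G" "y - y' \<in> st_ideal \<sigma> p G" "finsupp y" "finsupp x'"
  shows "st_mult \<sigma> p x y - st_mult \<sigma> p x' y' \<in> st_ideal \<sigma> p G"
proof -
  have "st_mult \<sigma> p x y - st_mult \<sigma> p x' y' = st_mult \<sigma> p (x - x') y + st_mult \<sigma> p x' (y - y')"
    by (simp add: st_mult_diff_left st_mult_diff_right)
  also have "\<dots> \<in> st_ideal \<sigma> p G"
    by (intro st_ideal.add st_ideal.rmult st_ideal.lmult assms)
  finally show ?thesis .
qed

lemma st_ideal_lincomb:
  assumes "finite U" "\<And>u. u \<in> U \<Longrightarrow> g u \<in> G" "\<And>w. E w = (\<Sum>u\<in>U. r u * g u w)"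
  shows "E \<in> st_ideal \<sigma> p G"
proof -
  have "E = (\<Sum>u\<in>U. (\<lambda>w. r u * g u w))" by (rule ext) (simp add: assms(3) sum_fun_apply)
  also have "\<dots> \<in> st_ideal \<sigma> p G" by (intro st_ideal_sum st_ideal_scale st_ideal.gen assms(2))
  finally show ?thesis .
qed

text \<open>Right multiplication twists the degree-2 coefficients by the parity of the pair; the
  hypothesis on \<open>\<pi>\<close> makes this twist uniform on the support of each \<open>D v\<close>.\<close>
lemma st_ideal_quadratic_annihilator:
  fixes sc :: "'k::field \<Rightarrow> 'r" and D :: "'v \<Rightarrow> 'g \<Rightarrow> 'g \<Rightarrow> 'k"
  assumes central: "\<And>c x. sc c * x = x * sc c"
    and sc_zero: "sc 0 = 0"
    and parity: "\<And>v a b. D v a b \<noteq> 0 \<Longrightarrow> (p a \<noteq> p b) = \<pi> v"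
    and gens: "\<And>q. q \<in> G \<Longrightarrow> q [] = 0 \<and> (\<forall>a. q [a] = 0) \<and>
        (\<forall>v. (\<Sum>a\<in>UNIV. \<Sum>b\<in>UNIV. q [a, b] * sc (D v a b)) = 0)"
    and x: "x \<in> st_ideal \<sigma> p G"
  shows "x [] = 0 \<and> (\<forall>a. x [a] = 0) \<and> (\<forall>v. (\<Sum>a\<in>UNIV. \<Sum>b\<in>UNIV. x [a, b] * sc (D v a b)) = 0)"
  using x
proof (induction rule: st_ideal.induct)
  case (gen q) then show ?case by (rule gens)
next
  case zero then show ?case by simp
next
  case (add x y) then show ?case by (simp add: distrib_right sum.distrib)
next
  case (lmult a x)
  then show ?case by (simp add: st_mult_length1 st_mult_length2 mult.assoc flip: sum_distrib_left)
next
  case (rmult a x)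
  have "st_mult \<sigma> p x a [c, d] * sc (D v c d) = x [c, d] * sc (D v c d) * twist (\<pi> v) (a [])"
    for v c d
  proof (cases "D v c d = 0")
    case False
    then have "(p c \<noteq> p d) = \<pi> v" by (rule parity)
    then show ?thesis using rmult.IH by (simp add: st_mult_length2 mult.assoc central)
  qed (simp add: sc_zero)
  then show ?case using rmult.IH by (simp add: st_mult_length1 st_mult_length2 flip: sum_distrib_right)
qed

end

section \<open>Super-algebras\<close>

locale super_alg =
  fixes sc :: "'k::field \<Rightarrow> 'r::ring_1" and Ev Od :: "'r set"
  assumes super_algebra: "super_algebra sc Ev Od"
begin

lemma sc_one [simp]: "sc 1 = 1"
  using super_algebra unfolding super_algebra_def by metis

lemma sc_add: "sc (a + b) = sc a + sc b"
  using super_algebra unfolding super_algebra_def by metis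

lemma sc_mult: "sc (a * b) = sc a * sc b"
  using super_algebra unfolding super_algebra_def by metis

lemma sc_central: "sc a * r = r * sc a"
  using super_algebra unfolding super_algebra_def by metis

lemma Ev_zero [simp]: "0 \<in> Ev"
  using super_algebra unfolding super_algebra_def by metis

lemma Od_zero [simp]: "0 \<in> Od"
  using super_algebra unfolding super_algebra_def by metis

lemma Ev_add: "x \<in> Ev \<Longrightarrow> y \<in> Ev \<Longrightarrow> x + y \<in> Ev"
  using super_algebra unfolding super_algebra_def by metis

lemma Od_add: "x \<in> Od \<Longrightarrow> y \<in> Od \<Longrightarrow> x + y \<in> Od"
  using super_algebra unfolding super_algebra_def by metis

lemma Ev_sc: "x \<in> Ev \<Longrightarrow> sc c * x \<in> Ev"
  using super_algebra unfolding super_algebra_def by metis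

lemma Od_sc: "x \<in> Od \<Longrightarrow> sc c * x \<in> Od"
  using super_algebra unfolding super_algebra_def by metis

lemma Ev_mult_Ev: "x \<in> Ev \<Longrightarrow> y \<in> Ev \<Longrightarrow> x * y \<in> Ev"
  using super_algebra unfolding super_algebra_def by metis

lemma Ev_mult_Od: "x \<in> Ev \<Longrightarrow> y \<in> Od \<Longrightarrow> x * y \<in> Od"
  using super_algebra unfolding super_algebra_def by metis

lemma Od_mult_Ev: "x \<in> Od \<Longrightarrow> y \<in> Ev \<Longrightarrow> x * y \<in> Od"
  using super_algebra unfolding super_algebra_def by metis

lemma Od_mult_Od: "x \<in> Od \<Longrightarrow> y \<in> Od \<Longrightarrow> x * y \<in> Ev"
  using super_algebra unfolding super_algebra_def by metis

lemma Ev_Od_decomp_unique: "\<exists>!p. fst p \<in> Ev \<and> snd p \<in> Od \<and> r = fst p + snd p"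
  using super_algebra unfolding super_algebra_def by metis

lemma sc_zero [simp]: "sc 0 = 0"
  using sc_add[of 0 0] by simp

lemma sc_uminus: "sc (- a) = - sc a"
  using sc_add[of a "-a"] by (intro minus_unique[symmetric]) simp

lemma sc_sum: "sc (sum f A) = (\<Sum>x\<in>A. sc (f x))"
  by (induction A rule: infinite_finite_induct) (auto simp: sc_add)

lemma sc_left_commute: "sc a * (sc b * x) = sc b * (sc a * x)"
  by (metis mult.assoc sc_central)

lemma sc_mult_sc: "sc a * x * sc b = x * sc (a * b)"
  by (metis mult.assoc sc_central sc_mult)

lemma Ev_uminus: "x \<in> Ev \<Longrightarrow> - x \<in> Ev"
  using Ev_sc[of x "-1"] by (simp add: sc_uminus)

lemma Od_uminus: "x \<in> Od \<Longrightarrow> - x \<in> Od"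
  using Od_sc[of x "-1"] by (simp add: sc_uminus)

lemma Ev_Od_decomp: obtains e d where "e \<in> Ev" "d \<in> Od" "r = e + d"
  using Ev_Od_decomp_unique by (metis (no_types, lifting))

lemma Ev_Od_unique:
  assumes "e1 \<in> Ev" "d1 \<in> Od" "e2 \<in> Ev" "d2 \<in> Od" "e1 + d1 = e2 + d2"
  shows "e1 = e2 \<and> d1 = d2"
proof -
  have "\<exists>!q. fst q \<in> Ev \<and> snd q \<in> Od \<and> e1 + d1 = fst q + snd q"
    using Ev_Od_decomp_unique by blast
  then have "(e1, d1) = (e2, d2)" using assms by (metis fst_conv snd_conv)
  then show ?thesis by simp
qed

lemma Ev_Od_Int: "x \<in> Ev \<Longrightarrow> x \<in> Od \<Longrightarrow> x = 0"
  using Ev_Od_unique[of x 0 0 x] by simp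

text \<open>The unit is even: its odd part \<open>d\<close> satisfies \<open>d = d * d\<close>, which is even.\<close>
lemma one_Ev: "1 \<in> Ev"
proof -
  obtain e d where ed: "e \<in> Ev" "d \<in> Od" "1 = e + d" by (rule Ev_Od_decomp)
  have "e + 0 = e * e + e * d" using ed(3) by (metis add.right_neutral distrib_left mult.right_neutral)
  then have "e * d = 0" using Ev_Od_unique[of e 0 "e * e" "e * d"] ed Ev_mult_Ev Ev_mult_Od by auto
  have "0 + d = d * d + e * d" using ed(3)
    by (metis add.commute add.left_neutral distrib_right mult.left_neutral)
  then have "d = d * d" using Ev_Od_unique[of 0 d "d * d" "e * d"] ed Od_mult_Od \<open>e * d = 0\<close> by auto
  then have "d = 0" using Ev_Od_Int ed Od_mult_Od by metis
  then show ?thesis using ed by simp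
qed

lemma sc_Ev: "sc c \<in> Ev"
  using Ev_sc[OF one_Ev, of c] by simp

abbreviation \<sigma> where "\<sigma> \<equiv> gaut Ev Od"

lemma gaut_Ev_Od: assumes "e \<in> Ev" "d \<in> Od" shows "\<sigma> (e + d) = e - d"
  unfolding gaut_def
proof (rule the_equality)
  show "\<exists>e'\<in>Ev. \<exists>f\<in>Od. e + d = e' + f \<and> e - d = e' - f" using assms by blast
  fix s assume "\<exists>e'\<in>Ev. \<exists>f\<in>Od. e + d = e' + f \<and> s = e' - f"
  then obtain e' f where "e' \<in> Ev" "f \<in> Od" "e + d = e' + f" "s = e' - f" by blast
  then show "s = e - d" using Ev_Od_unique[of e d e' f] assms by auto
qed

lemma gaut_Ev: "x \<in> Ev \<Longrightarrow> \<sigma> x = x"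
  using gaut_Ev_Od[of x 0] by simp

lemma gaut_Od: "x \<in> Od \<Longrightarrow> \<sigma> x = - x"
  using gaut_Ev_Od[of 0 x] by simp

sublocale gaut: involutive_automorphism \<sigma>
proof
  fix x y :: 'r
  obtain e d where x: "e \<in> Ev" "d \<in> Od" "x = e + d" by (rule Ev_Od_decomp)
  obtain e' d' where y: "e' \<in> Ev" "d' \<in> Od" "y = e' + d'" by (rule Ev_Od_decomp)
  have \<sigma>x: "\<sigma> x = e - d" and \<sigma>y: "\<sigma> y = e' - d'"
    using x y gaut_Ev_Od by simp_all
  have "x + y = (e + e') + (d + d')" using x y by (simp add: algebra_simps)
  then have "\<sigma> (x + y) = (e + e') - (d + d')"
    by (simp only: gaut_Ev_Od Ev_add Od_add x(1,2) y(1,2))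
  then show "\<sigma> (x + y) = \<sigma> x + \<sigma> y" by (simp add: \<sigma>x \<sigma>y algebra_simps)
  have "x * y = (e * e' + d * d') + (e * d' + d * e')"
    using x y by (simp add: algebra_simps)
  moreover have "e * e' + d * d' \<in> Ev" "e * d' + d * e' \<in> Od"
    using x y by (auto intro: Ev_add Od_add Ev_mult_Ev Od_mult_Od Ev_mult_Od Od_mult_Ev)
  ultimately have "\<sigma> (x * y) = (e * e' + d * d') - (e * d' + d * e')"
    by (simp add: gaut_Ev_Od)
  then show "\<sigma> (x * y) = \<sigma> x * \<sigma> y" by (simp add: \<sigma>x \<sigma>y algebra_simps)
  have "\<sigma> (e + (- d)) = e - (- d)" using x by (intro gaut_Ev_Od Od_uminus)
  then show "\<sigma> (\<sigma> x) = x" using \<sigma>x x(3) by simp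
  show "\<sigma> 1 = 1" by (rule gaut_Ev[OF one_Ev])
qed

lemma homog_sum: "(\<And>x. x \<in> A \<Longrightarrow> homog Ev Od b (f x)) \<Longrightarrow> homog Ev Od b (sum f A)"
  by (induction A rule: infinite_finite_induct) (auto simp: homog_def Ev_add Od_add)

lemma homog_mult: "homog Ev Od b x \<Longrightarrow> homog Ev Od c y \<Longrightarrow> homog Ev Od (b \<noteq> c) (x * y)"
  by (auto simp: homog_def Ev_mult_Ev Ev_mult_Od Od_mult_Ev Od_mult_Od)

lemma homog_sc: "homog Ev Od b x \<Longrightarrow> homog Ev Od b (sc c * x)"
  by (auto simp: homog_def Ev_sc Od_sc)

lemma twist_homog: "homog Ev Od q x \<Longrightarrow> gaut.twist b x = sgnb (b \<and> q) * x"
  by (auto simp: homog_def gaut.twist_def gaut_Ev gaut_Od split: if_splits)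

lemma homog_twist: "homog Ev Od q x \<Longrightarrow> homog Ev Od q (gaut.twist b x)"
  by (auto simp: homog_def gaut.twist_def gaut_Ev gaut_Od Od_uminus Ev_uminus split: if_splits)

lemma st_mult_scale_sc_right:
  "st_mult \<sigma> p P (\<lambda>w. sc c * Q w) = (\<lambda>w. sc c * st_mult \<sigma> p P Q w)"
  by (rule gaut.st_mult_scale_right) (simp_all add: sc_central gaut_Ev sc_Ev)

end

section \<open>Linear substitutions\<close>

definition st_lin :: "('g1 \<Rightarrow> 'g2 \<Rightarrow> 'r::ring_1) \<Rightarrow> 'g1 \<Rightarrow> 'g2 list \<Rightarrow> 'r" where
  "st_lin z g w = (if length w = 1 then z g (hd w) else 0)"

lemma st_lin_simps [simp]: "st_lin z g [] = 0" "st_lin z g [h] = z g h"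
  by (simp_all add: st_lin_def)

lemma degree_one_st_lin: "degree_one (st_lin z g)"
  by (simp add: degree_one_def st_lin_def)

lemma finsupp_st_lin: "finite (UNIV :: 'g2 set) \<Longrightarrow> finsupp (st_lin z g :: 'g2 list \<Rightarrow> 'r::ring_1)"
  by (rule finsupp_length_le[of _ 1]) (auto simp: st_lin_def split: if_splits)

context super_alg
begin

definition st_subst_word :: "('g2 \<Rightarrow> bool) \<Rightarrow> ('g1 \<Rightarrow> 'g2 \<Rightarrow> 'r) \<Rightarrow> 'g1 list \<Rightarrow> 'g2 list \<Rightarrow> 'r" where
  "st_subst_word p z w = foldr (\<lambda>g A. st_mult \<sigma> p (st_lin z g) A) w st_one"

lemma st_subst_word_Nil [simp]: "st_subst_word p z [] = st_one"
  by (simp add: st_subst_word_def)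

lemma st_subst_word_Cons: "st_subst_word p z (g # w) = st_mult \<sigma> p (st_lin z g) (st_subst_word p z w)"
  by (simp add: st_subst_word_def)

lemma st_subst_word_append:
  "st_subst_word p z (u @ v) = st_mult \<sigma> p (st_subst_word p z u) (st_subst_word p z v)"
  by (induction u)
    (simp_all add: gaut.st_mult_st_one_left st_subst_word_Cons
      gaut.st_mult_assoc_degree_one[OF degree_one_st_lin])

lemma st_subst_word_single: "st_subst_word p z [g] = st_lin z g"
  by (simp add: st_subst_word_Cons gaut.st_mult_st_one_right)

lemma st_subst_word_length: "st_subst_word p z u v \<noteq> 0 \<Longrightarrow> length v = length u"
proof (induction u arbitrary: v)
  case Nil then show ?case by (simp add: st_one_def split: if_splits)
next
  case (Cons g u)
  then show ?case
  proof (cases v)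
    case (Cons c v')
    then have "st_subst_word p z u v' \<noteq> 0"
      using Cons.prems by (auto simp: st_subst_word_Cons gaut.st_mult_degree_one_Cons[OF degree_one_st_lin])
    then show ?thesis using Cons.IH Cons by simp
  qed (simp add: st_subst_word_Cons gaut.st_mult_degree_one_Nil[OF degree_one_st_lin])
qed

lemma homog_st_subst_word:
  assumes z: "\<And>g h. homog Ev Od (p1 g \<noteq> p2 h) (z g h)"
  shows "homog Ev Od (wpar p1 u \<noteq> wpar p2 v) (st_subst_word p2 z u v)"
proof (induction u arbitrary: v)
  case Nil then show ?case by (simp add: st_one_def homog_def one_Ev)
next
  case (Cons g u)
  show ?case
  proof (cases v)
    case Nil then show ?thesis
      by (simp add: st_subst_word_Cons gaut.st_mult_degree_one_Nil[OF degree_one_st_lin] homog_def)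
  next
    case (Cons c v')
    have "homog Ev Od ((p1 g \<noteq> p2 c) \<noteq> (wpar p1 u \<noteq> wpar p2 v'))
        (z g c * gaut.twist (p2 c) (st_subst_word p2 z u v'))"
      by (intro homog_mult z homog_twist Cons.IH)
    moreover have "((p1 g \<noteq> p2 c) \<noteq> (wpar p1 u \<noteq> wpar p2 v')) = (wpar p1 (g # u) \<noteq> wpar p2 v)"
      using Cons by auto
    ultimately show ?thesis
      using Cons by (simp add: st_subst_word_Cons gaut.st_mult_degree_one_Cons[OF degree_one_st_lin])
  qed
qed

lemma finsupp_st_subst_word:
  "finite (UNIV :: 'g2 set) \<Longrightarrow> finsupp (st_subst_word p z u :: 'g2 list \<Rightarrow> 'r)"
  by (rule finsupp_length_le[of _ "length u"]) (auto dest: st_subst_word_length)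

text \<open>The algebra map \<open>K \<otimes> T(V\<^sub>1) \<rightarrow> R \<otimes> T(V\<^sub>2)\<close> sending the generator \<open>g\<close> to
  \<open>st_lin z g\<close>; the morphisms \<open>f\<^sub>M\<close> and \<open>f\<^sup>M\<close> of the theorem are induced by it.\<close>
definition st_subst :: "('g2 \<Rightarrow> bool) \<Rightarrow> ('g1 \<Rightarrow> 'g2 \<Rightarrow> 'r) \<Rightarrow> ('g1 list \<Rightarrow> 'k) \<Rightarrow> 'g2 list \<Rightarrow> 'r" where
  "st_subst p z P = (\<lambda>v. \<Sum>u\<in>{u. P u \<noteq> 0}. sc (P u) * st_subst_word p z u v)"

lemma st_subst_eq_sum:
  assumes "finite S" "{u. P u \<noteq> 0} \<subseteq> S"
  shows "st_subst p z P = (\<Sum>u\<in>S. (\<lambda>v. sc (P u) * st_subst_word p z u v))"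
proof (rule ext)
  fix v
  have "st_subst p z P v = (\<Sum>u\<in>S. sc (P u) * st_subst_word p z u v)"
    unfolding st_subst_def by (rule sum.mono_neutral_left) (use assms in auto)
  then show "st_subst p z P v = (\<Sum>u\<in>S. (\<lambda>v. sc (P u) * st_subst_word p z u v)) v"
    by (simp add: sum_fun_apply)
qed

lemma st_subst_add:
  assumes "finsupp P" "finsupp Q"
  shows "st_subst p z (P + Q) = st_subst p z P + st_subst p z Q"
proof -
  define S where "S = {u. P u \<noteq> 0} \<union> {u. Q u \<noteq> 0}"
  have S: "finite S" using assms by (simp add: S_def finsupp_def)
  have "st_subst p z (P + Q) = (\<Sum>u\<in>S. (\<lambda>v. sc ((P + Q) u) * st_subst_word p z u v))"
    by (rule st_subst_eq_sum[OF S]) (auto simp: S_def)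
  also have "\<dots> = (\<Sum>u\<in>S. (\<lambda>v. sc (P u) * st_subst_word p z u v))
      + (\<Sum>u\<in>S. (\<lambda>v. sc (Q u) * st_subst_word p z u v))"
    by (simp add: fun_eq_iff sum_fun_apply sc_add distrib_right sum.distrib)
  also have "\<dots> = st_subst p z P + st_subst p z Q"
    by (subst (1 2) st_subst_eq_sum[OF S]) (auto simp: S_def)
  finally show ?thesis .
qed

lemma st_subst_diff:
  assumes "finsupp P" "finsupp Q"
  shows "st_subst p z (P - Q) = st_subst p z P - st_subst p z Q"
proof -
  have "finsupp (P - Q)"
    using assms unfolding finsupp_def
    by (rule_tac finite_subset[of _ "{w. P w \<noteq> 0} \<union> {w. Q w \<noteq> 0}"]) auto
  then have "st_subst p z (P - Q) + st_subst p z Q = st_subst p z P"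
    using st_subst_add[of "P - Q" Q p z] assms(2) by simp
  then show ?thesis by (simp add: eq_diff_eq)
qed

lemma st_subst_scale:
  assumes "finsupp P"
  shows "st_subst p z (\<lambda>w. c * P w) = (\<lambda>v. sc c * st_subst p z P v)"
proof -
  define S where "S = {u. P u \<noteq> 0}"
  have "finite S" using assms by (simp add: S_def finsupp_def)
  then show ?thesis
    by (subst (1 2) st_subst_eq_sum[of S])
      (auto simp: S_def sum_fun_apply sc_mult sum_distrib_left mult.assoc)
qed

lemma st_subst_sum:
  "(\<And>x. x \<in> A \<Longrightarrow> finsupp (f x)) \<Longrightarrow> st_subst p z (sum f A) = (\<Sum>x\<in>A. st_subst p z (f x))"
proof (induction A rule: infinite_finite_induct)
  case (insert x F)
  have "finsupp (f x)" "finsupp (sum f F)" using insert.prems by (auto intro: finsupp_sum)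
  then show ?case using insert by (simp only: sum.insert[OF insert(1,2)] st_subst_add) simp
qed (simp_all add: st_subst_def zero_fun_def)

lemma st_subst_st_word: "st_subst p z (st_word u) = st_subst_word p z u"
  by (subst st_subst_eq_sum[of "{u}"]) (auto simp: st_word_def)

lemma st_subst_st_gen: "st_subst p z (st_gen g) = st_lin z g"
  by (simp add: st_gen_eq_st_word st_subst_st_word st_subst_word_single)

lemma st_subst_st_one: "st_subst p z st_one = st_one"
  by (simp add: st_one_eq_st_word st_subst_st_word)

lemma finsupp_st_subst:
  assumes "finite (UNIV :: 'g2 set)" "finsupp P"
  shows "finsupp (st_subst p z P :: 'g2 list \<Rightarrow> 'r)"
  using assms by (subst st_subst_eq_sum[of "{u. P u \<noteq> 0}"])
    (auto simp: finsupp_def[of P] intro!: finsupp_sum finsupp_scale finsupp_st_subst_word)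

lemma st_subst_st_mult:
  fixes p2 :: "'g2 \<Rightarrow> bool"
  assumes "finite (UNIV :: 'g2 set)" "finsupp P" "finsupp Q"
  shows "st_subst p2 z (st_mult id p1 P Q) = st_mult \<sigma> p2 (st_subst p2 z P) (st_subst p2 z Q)"
proof -
  define SP where "SP = {u. P u \<noteq> 0}"
  define SQ where "SQ = {u. Q u \<noteq> 0}"
  have fP: "finite SP" and fQ: "finite SQ" using assms by (simp_all add: SP_def SQ_def finsupp_def)
  have "P = (\<Sum>u\<in>SP. (\<lambda>w. P u * st_word u w))" "Q = (\<Sum>v\<in>SQ. (\<lambda>w. Q v * st_word v w))"
    by (rule finsupp_eq_sum_st_word[OF fP], simp add: SP_def,
        rule finsupp_eq_sum_st_word[OF fQ], simp add: SQ_def)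
  then have "st_mult id p1 P Q
      = st_mult id p1 (\<Sum>u\<in>SP. (\<lambda>w. P u * st_word u w)) (\<Sum>v\<in>SQ. (\<lambda>w. Q v * st_word v w))"
    by (rule arg_cong2[where f = "st_mult id p1"])
  also have "\<dots> = (\<Sum>u\<in>SP. \<Sum>v\<in>SQ. (\<lambda>w. P u * (Q v * st_word (u @ v) w)))"
    by (rule ext)
      (simp add: id_automorphism.st_mult_sum_left id_automorphism.st_mult_sum_right
        id_automorphism.st_mult_scale_left id_automorphism.st_mult_scale_right mult.commute
        id_automorphism.st_mult_st_word sum_fun_apply sum_distrib_left mult.left_commute,
       rule sum.swap)
  finally have "st_subst p2 z (st_mult id p1 P Q)
      = (\<Sum>u\<in>SP. \<Sum>v\<in>SQ. (\<lambda>x. sc (P u) * (sc (Q v) * st_subst_word p2 z (u @ v) x)))"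
    by (simp add: st_subst_sum finsupp_sum finsupp_scale st_subst_scale st_subst_st_word)
  also have "\<dots> = st_mult \<sigma> p2 (\<Sum>u\<in>SP. (\<lambda>x. sc (P u) * st_subst_word p2 z u x))
      (\<Sum>v\<in>SQ. (\<lambda>x. sc (Q v) * st_subst_word p2 z v x))"
    by (rule ext)
      (simp add: gaut.st_mult_sum_left gaut.st_mult_sum_right gaut.st_mult_scale_left
        st_mult_scale_sc_right st_subst_word_append sum_fun_apply sum_distrib_left sc_left_commute,
       rule sum.swap)
  also have "\<dots> = st_mult \<sigma> p2 (st_subst p2 z P) (st_subst p2 z Q)"
    using st_subst_eq_sum[OF fP, of P p2 z] st_subst_eq_sum[OF fQ, of Q p2 z]
    by (simp add: SP_def SQ_def)
  finally show ?thesis .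
qed

end

section \<open>Quadratic algebras and their morphisms\<close>

definition st_quadratic :: "('k \<Rightarrow> 'r::ring_1) \<Rightarrow> ('r \<Rightarrow> 'r) \<Rightarrow> ('g \<Rightarrow> bool) \<Rightarrow> ('a \<Rightarrow> 'a \<Rightarrow> 'k)
    \<Rightarrow> ('a \<Rightarrow> 'g list \<Rightarrow> 'r) \<Rightarrow> 'g list \<Rightarrow> 'r" where
  "st_quadratic sc \<sigma> p C Y = (\<Sum>a\<in>UNIV. \<Sum>b\<in>UNIV. st_smul sc (C a b) (st_mult \<sigma> p (Y a) (Y b)))"

definition st_deg2 :: "('g \<Rightarrow> 'g \<Rightarrow> 'r::zero) \<Rightarrow> 'g list \<Rightarrow> 'r" where
  "st_deg2 e w = (if length w = 2 then e (w ! 0) (w ! 1) else 0)"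

lemma st_deg2_simps [simp]: "st_deg2 e [] = 0" "st_deg2 e [a] = 0" "st_deg2 e [a, b] = e a b"
  by (simp_all add: st_deg2_def)

lemma X_rels_eq_range_st_quadratic: "X_rels sc \<sigma> p B =
    range (\<lambda>v. st_quadratic sc \<sigma> p (\<lambda>i j. sgnb (p i \<and> p j) * B (fst v) (snd v) i j) st_gen)"
  by (simp add: X_rels_def st_quadratic_def case_prod_beta)

lemma Xi_rels_eq_range_st_quadratic: "Xi_rels sc \<sigma> p B =
    range (\<lambda>v. st_quadratic sc \<sigma> p (\<lambda>s t. Sop B s t (fst v) (snd v)) st_gen)"
  by (simp add: Xi_rels_def st_quadratic_def case_prod_beta)

lemma finsupp_st_quadratic:
  "(\<And>a. finsupp (Y a)) \<Longrightarrow> finsupp (st_quadratic id id p C Y :: 'g list \<Rightarrow> 'k::field)"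
  unfolding st_quadratic_def st_smul_def
  by (intro finsupp_sum finsupp_scale id_automorphism.finsupp_st_mult)

context involutive_automorphism
begin

lemma st_quadratic_st_gen:
  fixes C :: "'g::finite \<Rightarrow> 'g \<Rightarrow> 'k"
  shows "st_quadratic sc \<sigma> p C st_gen = st_deg2 (\<lambda>a b. sc (C a b))"
proof
  fix w
  have "sc (C a b) * st_word [a, b] w = (if w = [a, b] then sc (C a b) else 0)" for a b
    by (simp add: st_word_def)
  then have "st_quadratic sc \<sigma> p C st_gen w = (\<Sum>a\<in>UNIV. \<Sum>b\<in>UNIV. if w = [a, b] then sc (C a b) else 0)"
    by (simp add: st_quadratic_def sum_fun_apply st_smul_def st_mult_st_gen_st_gen)
  also have "\<dots> = st_deg2 (\<lambda>a b. sc (C a b)) w"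
  proof (cases "length w = 2")
    case True
    then obtain c d where "w = [c, d]" by (auto simp: length_eq_2_iff)
    then show ?thesis using sum_delta2[of UNIV UNIV c d "\<lambda>a b. sc (C a b)"]
      by (simp add: eq_commute conj_commute)
  qed (auto simp: st_deg2_def length_eq_2_iff)
  finally show "st_quadratic sc \<sigma> p C st_gen w = st_deg2 (\<lambda>a b. sc (C a b)) w" .
qed

lemma st_quadratic_st_lin:
  "st_quadratic sc \<sigma> p C (st_lin z) =
    st_deg2 (\<lambda>a b. \<Sum>i\<in>UNIV. \<Sum>j\<in>UNIV. sc (C i j) * (z i a * twist (p a) (z j b)))"
proof
  fix w
  have "st_mult \<sigma> p (st_lin z i) (st_lin z j) w
      = (if length w = 2 then z i (w ! 0) * twist (p (w ! 0)) (z j (w ! 1)) else 0)" for i j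
    by (cases w rule: remdups_adj.cases)
      (auto simp: st_mult_degree_one_Cons[OF degree_one_st_lin] st_lin_def)
  then show "st_quadratic sc \<sigma> p C (st_lin z) w =
      st_deg2 (\<lambda>a b. \<Sum>i\<in>UNIV. \<Sum>j\<in>UNIV. sc (C i j) * (z i a * twist (p a) (z j b))) w"
    by (simp add: st_quadratic_def st_deg2_def sum_fun_apply st_smul_def)
qed

end

lemma qa_morphismD:
  assumes "qa_morphism p1 J1 sc Ev Od p2 J2 F"
  shows qa_morphism_finsupp: "finsupp P \<Longrightarrow> finsupp (F P)"
    and qa_morphism_cong: "finsupp P \<Longrightarrow> finsupp Q \<Longrightarrow> P - Q \<in> J1 \<Longrightarrow> F P - F Q \<in> J2"
    and qa_morphism_add: "finsupp P \<Longrightarrow> finsupp Q \<Longrightarrow> F (P + Q) - (F P + F Q) \<in> J2"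
    and qa_morphism_smul: "finsupp P \<Longrightarrow> F (st_smul id c P) - st_smul sc c (F P) \<in> J2"
    and qa_morphism_mult:
      "finsupp P \<Longrightarrow> finsupp Q \<Longrightarrow> F (st_mult id p1 P Q) - st_mult (gaut Ev Od) p2 (F P) (F Q) \<in> J2"
  using assms unfolding qa_morphism_def by simp_all

context super_alg
begin

lemma st_subst_mem_st_ideal:
  fixes p2 :: "'g2 \<Rightarrow> bool"
  assumes fin: "finite (UNIV :: 'g2 set)"
    and gens: "\<And>q. q \<in> G1 \<Longrightarrow> finsupp q \<and> st_subst p2 z q \<in> st_ideal \<sigma> p2 G2"
    and x: "x \<in> st_ideal id p1 G1"
  shows "finsupp x \<and> st_subst p2 z x \<in> st_ideal \<sigma> p2 G2"
  using x
proof (induction rule: st_ideal.induct)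
  case (gen q) then show ?case by (rule gens)
next
  case zero
  show ?case using st_ideal.zero[of \<sigma> p2 G2] by (simp add: st_subst_def finsupp_def zero_fun_def)
next
  case (add x y)
  then show ?case using finsupp_add[of x y] st_subst_add[of x y p2 z]
      st_ideal.add[of "st_subst p2 z x" \<sigma> p2 G2 "st_subst p2 z y"]
    by (simp add: plus_fun_def)
next
  case (lmult a x)
  then show ?case
    by (simp add: id_automorphism.finsupp_st_mult st_subst_st_mult[OF fin] st_ideal.lmult
      finsupp_st_subst[OF fin])
next
  case (rmult a x)
  then show ?case
    by (simp add: id_automorphism.finsupp_st_mult st_subst_st_mult[OF fin] st_ideal.rmult
      finsupp_st_subst[OF fin])
qed

lemma st_subst_homogeneous_length:
  assumes "\<And>w. P w \<noteq> 0 \<Longrightarrow> length w = n" "st_subst p z P w \<noteq> 0"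
  shows "length w = n"
proof -
  obtain u where "u \<in> {u. P u \<noteq> 0}" "sc (P u) * st_subst_word p z u w \<noteq> 0"
    using assms(2) sum.not_neutral_contains_not_neutral unfolding st_subst_def by blast
  moreover from this(2) have "st_subst_word p z u w \<noteq> 0" by (rule contrapos_nn) simp
  ultimately show ?thesis using assms(1) st_subst_word_length[of p z u w] by simp
qed

lemma homog_st_subst:
  assumes z: "\<And>g h. homog Ev Od (p1 g \<noteq> p2 h) (z g h)"
    and P: "\<And>w. P w \<noteq> 0 \<Longrightarrow> wpar p1 w = b"
  shows "homog Ev Od (b \<noteq> wpar p2 w) (st_subst p2 z P w)"
  unfolding st_subst_def
proof (rule homog_sum)
  fix u assume "u \<in> {u. P u \<noteq> 0}"
  then have "wpar p1 u = b" using P by simp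
  moreover have "homog Ev Od (wpar p1 u \<noteq> wpar p2 w) (st_subst_word p2 z u w)"
    by (rule homog_st_subst_word[OF z])
  ultimately show "homog Ev Od (b \<noteq> wpar p2 w) (sc (P u) * st_subst_word p2 z u w)"
    using homog_sc by blast
qed

lemma qa_morphism_st_subst:
  fixes p1 :: "'g1 \<Rightarrow> bool" and p2 :: "'g2 \<Rightarrow> bool" and z :: "'g1 \<Rightarrow> 'g2 \<Rightarrow> 'r"
  assumes fin: "finite (UNIV :: 'g2 set)"
    and z: "\<And>g h. homog Ev Od (p1 g \<noteq> p2 h) (z g h)"
    and gens: "\<And>q. q \<in> G1 \<Longrightarrow> finsupp q \<and> st_subst p2 z q \<in> st_ideal \<sigma> p2 G2"
  shows "qa_morphism p1 (st_ideal id p1 G1) sc Ev Od p2 (st_ideal \<sigma> p2 G2) (st_subst p2 z)"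
proof -
  let ?J = "st_ideal \<sigma> p2 G2"
  have "st_subst p2 z P - st_subst p2 z Q \<in> ?J"
    if "finsupp P" "finsupp Q" "P - Q \<in> st_ideal id p1 G1" for P Q
    using st_subst_mem_st_ideal[OF fin gens that(3)] unfolding st_subst_diff[OF that(1,2)] by simp
  moreover have "st_subst p2 z (st_smul id c P) = st_smul sc c (st_subst p2 z P)" if "finsupp P" for c P
    using st_subst_scale[OF that] by (simp add: st_smul_def)
  moreover have "\<exists>Q. finsupp Q \<and> st_subst p2 z P - Q \<in> ?J \<and> (\<forall>w. Q w \<noteq> 0 \<longrightarrow> length w = n)"
    if "finsupp P" "\<forall>w. P w \<noteq> 0 \<longrightarrow> length w = n" for P n
    using that st_subst_homogeneous_length[of P n p2 z] finsupp_st_subst[OF fin, of P p2 z]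
    by (intro exI[of _ "st_subst p2 z P"]) (simp add: st_ideal.zero)
  moreover have "\<exists>Q. finsupp Q \<and> st_subst p2 z P - Q \<in> ?J \<and> (\<forall>w. homog Ev Od (b \<noteq> wpar p2 w) (Q w))"
    if "finsupp P" "\<forall>w. P w \<noteq> 0 \<longrightarrow> wpar p1 w = b" for P b
    using that homog_st_subst[of p1 p2 z P b, OF z] finsupp_st_subst[OF fin, of P p2 z]
    by (intro exI[of _ "st_subst p2 z P"]) (simp add: st_ideal.zero)
  ultimately show ?thesis
    unfolding qa_morphism_def
    by (simp add: finsupp_st_subst[OF fin] st_subst_add st_subst_st_mult[OF fin] st_subst_st_one
      st_ideal.zero)
qed

lemma qa_morphism_zero:
  assumes "qa_morphism p1 J1 sc Ev Od p2 (st_ideal \<sigma> p2 G2) F"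
  shows "F 0 \<in> st_ideal \<sigma> p2 G2"
proof -
  have "F (0 + 0) - (F 0 + F 0) \<in> st_ideal \<sigma> p2 G2"
    using qa_morphism_add[OF assms finsupp_zero finsupp_zero] .
  then have "- F 0 \<in> st_ideal \<sigma> p2 G2" by simp
  from gaut.st_ideal_scale[OF this, of "- 1"] show ?thesis by simp
qed

lemma qa_morphism_sum:
  assumes F: "qa_morphism p1 J1 sc Ev Od p2 (st_ideal \<sigma> p2 G2) F"
    and "\<And>x. x \<in> A \<Longrightarrow> finsupp (f x)"
  shows "F (sum f A) - (\<Sum>x\<in>A. F (f x)) \<in> st_ideal \<sigma> p2 G2"
  using assms(2)
proof (induction A rule: infinite_finite_induct)
  case (insert x A)
  have "F (f x + sum f A) - (F (f x) + F (sum f A)) \<in> st_ideal \<sigma> p2 G2"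
    using insert.prems by (intro qa_morphism_add[OF F]) (simp_all add: finsupp_sum)
  moreover have "F (sum f A) - (\<Sum>x\<in>A. F (f x)) \<in> st_ideal \<sigma> p2 G2"
    using insert.prems by (intro insert.IH) simp
  then have "(F (f x) + F (sum f A)) - (F (f x) + (\<Sum>x\<in>A. F (f x))) \<in> st_ideal \<sigma> p2 G2"
    by (simp only: add_diff_cancel_left)
  ultimately show ?case
    unfolding sum.insert[OF insert.hyps] by (rule st_ideal_diff_trans)
qed (simp_all add: qa_morphism_zero[OF F])

lemma qa_morphism_st_quadratic:
  fixes p1 :: "'g1 \<Rightarrow> bool" and p2 :: "'g2 \<Rightarrow> bool" and X :: "'g1 \<Rightarrow> 'g2 list \<Rightarrow> 'r"
  assumes F: "qa_morphism p1 J1 sc Ev Od p2 (st_ideal \<sigma> p2 G2) F"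
    and FX: "\<forall>g. F (st_gen g) - X g \<in> st_ideal \<sigma> p2 G2"
    and fX: "\<And>g. finsupp (X g)"
    and rel: "st_quadratic id id p1 C st_gen \<in> J1"
  shows "st_quadratic sc \<sigma> p2 C X \<in> st_ideal \<sigma> p2 G2"
proof -
  let ?J = "st_ideal \<sigma> p2 G2"
  let ?R = "st_quadratic id id p1 C st_gen"
  let ?m = "\<lambda>a b. st_mult id p1 (st_gen a) (st_gen b) :: 'g1 list \<Rightarrow> 'k"
  have fm: "finsupp (?m a b)" for a b by (simp add: id_automorphism.finsupp_st_mult)
  have "F ?R - F 0 \<in> ?J"
    using rel by (intro qa_morphism_cong[OF F] finsupp_st_quadratic) simp_all
  then have FR: "F ?R \<in> ?J"
    using st_ideal.add[OF _ qa_morphism_zero[OF F]] by fastforce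
  have FR_sum: "F ?R - (\<Sum>a\<in>UNIV. \<Sum>b\<in>UNIV. F (st_smul id (C a b) (?m a b))) \<in> ?J"
    unfolding st_quadratic_def
    by (rule st_ideal_diff_trans[OF qa_morphism_sum[OF F] gaut.st_ideal_diff_sum[OF qa_morphism_sum[OF F]]])
      (auto simp: st_smul_def fm intro!: finsupp_sum finsupp_scale)
  have termwise: "F (st_smul id (C a b) (?m a b)) - st_smul sc (C a b) (st_mult \<sigma> p2 (X a) (X b)) \<in> ?J"
    for a b
  proof -
    have "st_mult \<sigma> p2 (F (st_gen a)) (F (st_gen b)) - st_mult \<sigma> p2 (X a) (X b) \<in> ?J"
      using FX by (intro gaut.st_ideal_diff_st_mult qa_morphism_finsupp[OF F] fX) simp_all
    then have "F (?m a b) - st_mult \<sigma> p2 (X a) (X b) \<in> ?J"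
      by (rule st_ideal_diff_trans[OF qa_morphism_mult[OF F finsupp_st_gen finsupp_st_gen]])
    then show ?thesis by (rule st_ideal_diff_trans[OF qa_morphism_smul[OF F fm] gaut.st_ideal_diff_st_smul])
  qed
  have "F ?R - st_quadratic sc \<sigma> p2 C X \<in> ?J"
    unfolding st_quadratic_def[of sc]
    by (rule st_ideal_diff_trans[OF FR_sum]) (intro gaut.st_ideal_diff_sum termwise)
  then have "F ?R - (F ?R - st_quadratic sc \<sigma> p2 C X) \<in> ?J"
    by (rule gaut.st_ideal_diff[OF FR])
  then show ?thesis by simp
qed

end
lemma sum2_mult_sum_swap:
  "(\<Sum>a\<in>A. \<Sum>b\<in>B. x a b * (\<Sum>u\<in>U. y a b u * z u))
    = (\<Sum>u\<in>U. (\<Sum>a\<in>A. \<Sum>b\<in>B. x a b * y a b u) * (z u :: 'r::ring))"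
  by (simp add: sum_distrib_left sum_distrib_right mult.assoc sum.swap[of _ U])

context super_alg
begin

lemma st_subst_st_quadratic:
  fixes p1 :: "'g1 \<Rightarrow> bool" and p2 :: "'g2 \<Rightarrow> bool" and C :: "'g1 \<Rightarrow> 'g1 \<Rightarrow> 'k"
  assumes "finite (UNIV :: 'g2 set)"
  shows "st_subst p2 z (st_quadratic id id p1 C st_gen) = st_quadratic sc \<sigma> p2 C (st_lin z)"
proof -
  have "finsupp (st_mult id p1 (st_gen a) (st_gen b) :: 'g1 list \<Rightarrow> 'k)" for a b
    by (simp add: id_automorphism.finsupp_st_mult)
  then show ?thesis
    unfolding st_quadratic_def st_smul_def
    by (simp add: st_subst_sum finsupp_sum finsupp_scale st_subst_scale st_subst_st_mult[OF assms]
      st_subst_st_gen)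
qed

lemma quadratic_morphism_iff:
  fixes p1 :: "'g1 \<Rightarrow> bool" and p2 :: "'g2::finite \<Rightarrow> bool" and z :: "'g1 \<Rightarrow> 'g2 \<Rightarrow> 'r"
    and C :: "'v \<Rightarrow> 'g1 \<Rightarrow> 'g1 \<Rightarrow> 'k"
  assumes z: "\<And>g h. homog Ev Od (p1 g \<noteq> p2 h) (z g h)"
  shows "(\<exists>F. qa_morphism p1 (st_ideal id p1 (range (\<lambda>v. st_quadratic id id p1 (C v) st_gen)))
              sc Ev Od p2 (st_ideal \<sigma> p2 G) F \<and>
            (\<forall>g. F (st_gen g) - st_lin z g \<in> st_ideal \<sigma> p2 G))
     \<longleftrightarrow> (\<forall>v. st_quadratic sc \<sigma> p2 (C v) (st_lin z) \<in> st_ideal \<sigma> p2 G)"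
proof
  assume "\<exists>F. qa_morphism p1 (st_ideal id p1 (range (\<lambda>v. st_quadratic id id p1 (C v) st_gen)))
      sc Ev Od p2 (st_ideal \<sigma> p2 G) F \<and> (\<forall>g. F (st_gen g) - st_lin z g \<in> st_ideal \<sigma> p2 G)"
  then obtain F where F: "qa_morphism p1 (st_ideal id p1 (range (\<lambda>v. st_quadratic id id p1 (C v) st_gen)))
      sc Ev Od p2 (st_ideal \<sigma> p2 G) F" and FX: "\<forall>g. F (st_gen g) - st_lin z g \<in> st_ideal \<sigma> p2 G"
    by blast
  show "\<forall>v. st_quadratic sc \<sigma> p2 (C v) (st_lin z) \<in> st_ideal \<sigma> p2 G"
    using qa_morphism_st_quadratic[OF F FX finsupp_st_lin] by (simp add: st_ideal.gen)
next
  assume rels: "\<forall>v. st_quadratic sc \<sigma> p2 (C v) (st_lin z) \<in> st_ideal \<sigma> p2 G"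
  have "qa_morphism p1 (st_ideal id p1 (range (\<lambda>v. st_quadratic id id p1 (C v) st_gen)))
      sc Ev Od p2 (st_ideal \<sigma> p2 G) (st_subst p2 z)"
    using rels by (intro qa_morphism_st_subst z)
      (auto simp: st_subst_st_quadratic finsupp_st_quadratic)
  then show "\<exists>F. qa_morphism p1 (st_ideal id p1 (range (\<lambda>v. st_quadratic id id p1 (C v) st_gen)))
      sc Ev Od p2 (st_ideal \<sigma> p2 G) F \<and> (\<forall>g. F (st_gen g) - st_lin z g \<in> st_ideal \<sigma> p2 G)"
    by (auto simp: st_subst_st_gen st_ideal.zero)
qed

text \<open>The rows of \<open>Ct\<close> and the columns of \<open>D\<close> are orthogonal and, by the resolution of the
  identity, together span all coefficient vectors; so the ideal meets degree 2 exactly in the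
  vectors killed by \<open>D\<close>.\<close>
lemma st_deg2_mem_quadratic_ideal_iff:
  fixes Ct :: "'u::finite \<Rightarrow> 'g::finite \<Rightarrow> 'g \<Rightarrow> 'k" and D :: "'v \<Rightarrow> 'g \<Rightarrow> 'g \<Rightarrow> 'k"
    and L :: "'g \<Rightarrow> 'g \<Rightarrow> 'u \<Rightarrow> 'k" and N :: "'v \<Rightarrow> 'g \<Rightarrow> 'g \<Rightarrow> 'k"
  assumes orthogonal: "\<And>u v. (\<Sum>a\<in>UNIV. \<Sum>b\<in>UNIV. Ct u a b * D v a b) = 0"
    and resolution: "\<And>a b c d. (if a = c \<and> b = d then 1 else 0)
        = (\<Sum>u\<in>UNIV. L a b u * Ct u c d) + (\<Sum>v\<in>UNIV. D v a b * N v c d)"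
    and parity: "\<And>v a b. D v a b \<noteq> 0 \<Longrightarrow> (p a \<noteq> p b) = \<pi> v"
  shows "st_deg2 e \<in> st_ideal \<sigma> p (range (\<lambda>u. st_quadratic sc \<sigma> p (Ct u) st_gen))
    \<longleftrightarrow> (\<forall>v. (\<Sum>a\<in>UNIV. \<Sum>b\<in>UNIV. e a b * sc (D v a b)) = 0)"
proof
  assume mem: "st_deg2 e \<in> st_ideal \<sigma> p (range (\<lambda>u. st_quadratic sc \<sigma> p (Ct u) st_gen))"
  have "q [] = 0 \<and> (\<forall>a. q [a] = 0) \<and> (\<forall>v. (\<Sum>a\<in>UNIV. \<Sum>b\<in>UNIV. q [a, b] * sc (D v a b)) = 0)"
    if "q \<in> range (\<lambda>u. st_quadratic sc \<sigma> p (Ct u) st_gen)" for q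
    using that orthogonal
    by (auto simp: gaut.st_quadratic_st_gen sc_mult[symmetric] sc_sum[symmetric])
  from gaut.st_ideal_quadratic_annihilator[where sc = sc and D = D and \<pi> = \<pi>,
      OF sc_central sc_zero parity this mem]
  show "\<forall>v. (\<Sum>a\<in>UNIV. \<Sum>b\<in>UNIV. e a b * sc (D v a b)) = 0" by simp
next
  assume killed: "\<forall>v. (\<Sum>a\<in>UNIV. \<Sum>b\<in>UNIV. e a b * sc (D v a b)) = 0"
  define r where "r u = (\<Sum>a\<in>UNIV. \<Sum>b\<in>UNIV. e a b * sc (L a b u))" for u
  have "e c d = (\<Sum>u\<in>UNIV. r u * sc (Ct u c d))" for c d
  proof -
    have "e c d = (\<Sum>a\<in>UNIV. \<Sum>b\<in>UNIV. e a b * sc (if a = c \<and> b = d then 1 else 0))"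
      by (simp add: if_distrib[of sc] if_distrib[of "(*) _"] sum_delta2 cong: if_cong)
    also have "\<dots> = (\<Sum>a\<in>UNIV. \<Sum>b\<in>UNIV. e a b * (\<Sum>u\<in>UNIV. sc (L a b u) * sc (Ct u c d)))
        + (\<Sum>a\<in>UNIV. \<Sum>b\<in>UNIV. e a b * (\<Sum>v\<in>UNIV. sc (D v a b) * sc (N v c d)))"
      by (simp add: resolution sc_add sc_sum sc_mult distrib_left sum.distrib)
    also have "\<dots> = (\<Sum>u\<in>UNIV. r u * sc (Ct u c d))"
      unfolding sum2_mult_sum_swap using killed by (simp add: r_def)
    finally show ?thesis .
  qed
  then have "st_deg2 e w = (\<Sum>u\<in>UNIV. r u * st_quadratic sc \<sigma> p (Ct u) st_gen w)" for w
    by (auto simp: gaut.st_quadratic_st_gen st_deg2_def)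
  then show "st_deg2 e \<in> st_ideal \<sigma> p (range (\<lambda>u. st_quadratic sc \<sigma> p (Ct u) st_gen))"
    by (intro gaut.st_ideal_lincomb[where U = UNIV and r = r]) auto
qed

end

section \<open>Manin matrices\<close>

lemma sgnb_mult_cancel: "sgnb q * x * (sgnb q * y) = x * (y :: 'r::comm_ring_1)"
  by (cases q) simp_all

definition manin_entry :: "('k::field \<Rightarrow> 'r::ring_1) \<Rightarrow> ('i \<Rightarrow> bool) \<Rightarrow> ('j \<Rightarrow> bool)
    \<Rightarrow> ('i \<Rightarrow> 'i \<Rightarrow> 'i \<Rightarrow> 'i \<Rightarrow> 'k) \<Rightarrow> ('j \<Rightarrow> 'j \<Rightarrow> 'j \<Rightarrow> 'j \<Rightarrow> 'k) \<Rightarrow> ('i \<Rightarrow> 'j \<Rightarrow> 'r)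
    \<Rightarrow> 'i \<Rightarrow> 'i \<Rightarrow> 'j \<Rightarrow> 'j \<Rightarrow> 'r" where
  "manin_entry sc k l B Bt M s t c d = (\<Sum>i\<in>UNIV. \<Sum>j\<in>UNIV. \<Sum>a\<in>UNIV. \<Sum>b\<in>UNIV.
      sgnb ((k i \<noteq> l a) \<and> k j) * sc (B s t i j) * M i a * M j b * sc (Sop Bt a b c d))"

lemma sum_swap_pairs:
  "(\<Sum>a\<in>A. \<Sum>b\<in>B. \<Sum>i\<in>I. \<Sum>j\<in>J. f a b i j)
    = (\<Sum>i\<in>I. \<Sum>j\<in>J. \<Sum>a\<in>A. \<Sum>b\<in>B. (f a b i j :: 'r::comm_monoid_add))"
proof -
  have "(\<Sum>a\<in>A. \<Sum>b\<in>B. \<Sum>i\<in>I. \<Sum>j\<in>J. f a b i j) = (\<Sum>a\<in>A. \<Sum>i\<in>I. \<Sum>b\<in>B. \<Sum>j\<in>J. f a b i j)"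
    by (rule sum.cong[OF refl], rule sum.swap)
  also have "\<dots> = (\<Sum>i\<in>I. \<Sum>a\<in>A. \<Sum>j\<in>J. \<Sum>b\<in>B. f a b i j)"
    by (subst sum.swap) (rule sum.cong[OF refl], rule sum.cong[OF refl], rule sum.swap)
  also have "\<dots> = (\<Sum>i\<in>I. \<Sum>j\<in>J. \<Sum>a\<in>A. \<Sum>b\<in>B. f a b i j)"
    by (rule sum.cong[OF refl], rule sum.swap)
  finally show ?thesis .
qed

lemma Sop_resolution:
  fixes B :: "'g::finite \<Rightarrow> 'g \<Rightarrow> 'g \<Rightarrow> 'g \<Rightarrow> 'k::field"
  shows "(if a = c \<and> b = d then 1 else 0) = (\<Sum>u\<in>UNIV. (if u = (a, b) then 1 else 0) * Sop B c d (fst u) (snd u))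
     + (\<Sum>v\<in>UNIV. B (fst v) (snd v) a b * (if v = (c, d) then 1 else 0))"
  by (simp add: Sop_def if_distrib[of "\<lambda>x. x * _"] if_distrib[of "\<lambda>x. _ * x"] cong: if_cong)

lemma Sop_resolution_twisted:
  fixes B :: "'g::finite \<Rightarrow> 'g \<Rightarrow> 'g \<Rightarrow> 'g \<Rightarrow> 'k::field"
  shows "(if a = c \<and> b = d then 1 else 0)
     = (\<Sum>u\<in>UNIV. (if u = (a, b) then sgnb (p a \<and> p b) else 0) * (sgnb (p c \<and> p d) * B (fst u) (snd u) c d))
     + (\<Sum>v\<in>UNIV. sgnb (p a \<and> p b) * Sop B a b (fst v) (snd v) * (if v = (c, d) then sgnb (p c \<and> p d) else 0))"
proof -
  have "(\<Sum>u\<in>UNIV. (if u = (a, b) then sgnb (p a \<and> p b) else 0) * (sgnb (p c \<and> p d) * B (fst u) (snd u) c d))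
      + (\<Sum>v\<in>UNIV. sgnb (p a \<and> p b) * Sop B a b (fst v) (snd v) * (if v = (c, d) then sgnb (p c \<and> p d) else 0))
      = sgnb (p a \<and> p b) * sgnb (p c \<and> p d) * (B a b c d + Sop B a b c d)"
    by (simp add: if_distrib[of "\<lambda>x. x * _"] if_distrib[of "\<lambda>x. _ * x"] algebra_simps cong: if_cong)
  then show ?thesis by (cases "a = c \<and> b = d") (auto simp: Sop_def sgnb_def)
qed

context involutive_automorphism
begin

lemma sum_st_scal_st_gen:
  fixes M :: "'i \<Rightarrow> 'g::finite \<Rightarrow> 'r"
  shows "(\<Sum>a\<in>UNIV. st_mult \<sigma> p (st_scal (M i a)) (st_gen a)) = st_lin M i"
proof
  fix w
  have "M i a * st_gen a w = (if w = [a] then M i a else 0)" for a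
    by (simp add: st_gen_def)
  then have "(\<Sum>a\<in>UNIV. st_mult \<sigma> p (st_scal (M i a)) (st_gen a)) w = (\<Sum>a\<in>UNIV. if w = [a] then M i a else 0)"
    by (simp add: sum_fun_apply st_mult_st_scal_left)
  also have "\<dots> = st_lin M i w"
  proof (cases "length w = 1")
    case True
    then obtain a where "w = [a]" by (auto simp: length_Suc_conv)
    then show ?thesis by (simp add: eq_commute)
  next
    case False
    then have "w \<noteq> [a]" for a by auto
    then show ?thesis using False by (simp add: st_lin_def)
  qed
  finally show "(\<Sum>a\<in>UNIV. st_mult \<sigma> p (st_scal (M i a)) (st_gen a)) w = st_lin M i w" .
qed

lemma sum_st_gen_st_scal:
  fixes M :: "'g::finite \<Rightarrow> 'j \<Rightarrow> 'r"
  shows "(\<Sum>i\<in>UNIV. st_mult \<sigma> p (st_gen i) (st_scal (M i a))) = st_lin (\<lambda>a i. twist (p i) (M i a)) a"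
proof
  fix w show "(\<Sum>i\<in>UNIV. st_mult \<sigma> p (st_gen i) (st_scal (M i a))) w = st_lin (\<lambda>a i. twist (p i) (M i a)) a w"
  proof (cases w)
    case (Cons c v)
    have "(\<Sum>i\<in>UNIV. st_mult \<sigma> p (st_gen i) (st_scal (M i a))) w
        = (\<Sum>i\<in>UNIV. if c = i then twist (p c) (st_scal (M i a) v) else 0)"
      unfolding Cons sum_fun_apply st_mult_degree_one_Cons[OF degree_one_st_gen]
      by (simp add: st_gen_def if_distrib[of "\<lambda>x. x * _"] cong: if_cong)
    then show ?thesis using Cons by (cases v) (simp_all add: st_scal_def st_lin_def)
  qed (simp add: sum_fun_apply st_gen_def)
qed

end

context super_alg
begin

lemma manin_entry_eq_X_annihilator:
  fixes M :: "'i \<Rightarrow> 'j \<Rightarrow> 'r"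
  assumes hM: "\<forall>i a. homog Ev Od (k i \<noteq> l a) (M i a)"
  shows "(\<Sum>a\<in>UNIV. \<Sum>b\<in>UNIV. (\<Sum>i\<in>UNIV. \<Sum>j\<in>UNIV.
            sc (sgnb (k i \<and> k j) * B s t i j) * (M i a * gaut.twist (l a) (M j b)))
          * sc (sgnb (l a \<and> l b) * Sop Bt a b c d))
      = manin_entry sc k l B Bt M s t c d"
proof -
  have "sc (sgnb (k i \<and> k j) * B s t i j) * (M i a * gaut.twist (l a) (M j b))
        * sc (sgnb (l a \<and> l b) * Sop Bt a b c d)
      = sgnb ((k i \<noteq> l a) \<and> k j) * sc (B s t i j) * M i a * M j b * sc (Sop Bt a b c d)" for i j a b
  proof -
    have "gaut.twist (l a) (M j b) = sgnb (l a \<and> (k j \<noteq> l b)) * M j b"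
      using hM by (intro twist_homog) simp
    then show ?thesis
      by (cases "k i"; cases "k j"; cases "l a"; cases "l b") (simp_all add: sc_mult sc_uminus mult.assoc)
  qed
  then show ?thesis
    unfolding manin_entry_def sum_distrib_right by (subst sum_swap_pairs) simp
qed

lemma manin_iff_X_morphism:
  fixes B :: "'i::finite \<Rightarrow> 'i \<Rightarrow> 'i \<Rightarrow> 'i \<Rightarrow> 'k" and Bt :: "'j::finite \<Rightarrow> 'j \<Rightarrow> 'j \<Rightarrow> 'j \<Rightarrow> 'k"
    and k :: "'i \<Rightarrow> bool" and l :: "'j \<Rightarrow> bool" and M :: "'i \<Rightarrow> 'j \<Rightarrow> 'r"
  assumes eBt: "even_idempotent l Bt"
    and hM: "\<forall>i a. homog Ev Od (k i \<noteq> l a) (M i a)"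
  shows "(\<forall>s t c d. manin_entry sc k l B Bt M s t c d = 0) \<longleftrightarrow>
    (\<exists>F. qa_morphism k (st_ideal id k (X_rels id id k B)) sc Ev Od l (st_ideal \<sigma> l (X_rels sc \<sigma> l Bt)) F \<and>
      (\<forall>i. F (st_gen i) - (\<Sum>a\<in>UNIV. st_mult \<sigma> l (st_scal (M i a)) (st_gen a))
        \<in> st_ideal \<sigma> l (X_rels sc \<sigma> l Bt)))"
proof -
  let ?J = "st_ideal \<sigma> l (X_rels sc \<sigma> l Bt)"
  let ?C = "\<lambda>v i j. sgnb (k i \<and> k j) * B (fst v) (snd v) i j"
  let ?D = "\<lambda>w a b. sgnb (l a \<and> l b) * Sop Bt a b (fst w) (snd w)"
  have "(\<exists>F. qa_morphism k (st_ideal id k (X_rels id id k B)) sc Ev Od l ?J F \<and>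
      (\<forall>i. F (st_gen i) - (\<Sum>a\<in>UNIV. st_mult \<sigma> l (st_scal (M i a)) (st_gen a)) \<in> ?J))
      \<longleftrightarrow> (\<forall>v. st_quadratic sc \<sigma> l (?C v) (st_lin M) \<in> ?J)"
    unfolding gaut.sum_st_scal_st_gen X_rels_eq_range_st_quadratic[of id id k B]
    by (rule quadratic_morphism_iff) (use hM in simp)
  also have "\<dots> \<longleftrightarrow> (\<forall>v w. (\<Sum>a\<in>UNIV. \<Sum>b\<in>UNIV. (\<Sum>i\<in>UNIV. \<Sum>j\<in>UNIV.
      sc (?C v i j) * (M i a * gaut.twist (l a) (M j b))) * sc (?D w a b)) = 0)"
    unfolding gaut.st_quadratic_st_lin X_rels_eq_range_st_quadratic
  proof (intro all_cong1 st_deg2_mem_quadratic_ideal_iff)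
    show "(\<Sum>a\<in>UNIV. \<Sum>b\<in>UNIV. sgnb (l a \<and> l b) * Bt (fst u) (snd u) a b * ?D w a b) = 0" for u w
      using even_idempotent_mult_Sop[OF eBt] by (simp add: sgnb_mult_cancel)
    show "?D w a b \<noteq> 0 \<Longrightarrow> (l a \<noteq> l b) = (l (fst w) \<noteq> l (snd w))" for w a b
      using Sop_parity[OF eBt] by auto
  qed (rule Sop_resolution_twisted)
  also have "\<dots> \<longleftrightarrow> (\<forall>s t c d. manin_entry sc k l B Bt M s t c d = 0)"
    by (simp add: manin_entry_eq_X_annihilator[OF hM])
  finally show ?thesis by blast
qed

lemma manin_entry_eq_Xi_annihilator:
  fixes M :: "'i::finite \<Rightarrow> 'j::finite \<Rightarrow> 'r"
  assumes eB: "even_idempotent k B" and eBt: "even_idempotent l Bt"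
    and hM: "\<forall>i a. homog Ev Od (k i \<noteq> l a) (M i a)"
  shows "(\<Sum>i\<in>UNIV. \<Sum>j\<in>UNIV. (\<Sum>a\<in>UNIV. \<Sum>b\<in>UNIV. sc (Sop Bt a b c d)
            * (gaut.twist (k i) (M i a) * gaut.twist (k i) (gaut.twist (k j) (M j b))))
          * sc (B p q i j))
      = sgnb ((k p \<noteq> k q) \<and> (l c = l d)) * manin_entry sc k l B Bt M p q c d"
proof -
  have "sc (Sop Bt a b c d) * (gaut.twist (k i) (M i a) * gaut.twist (k i) (gaut.twist (k j) (M j b)))
        * sc (B p q i j)
      = sgnb ((k p \<noteq> k q) \<and> (l c = l d))
        * (sgnb ((k i \<noteq> l a) \<and> k j) * sc (B p q i j) * M i a * M j b * sc (Sop Bt a b c d))"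
    for i j a b
  proof (cases "B p q i j = 0 \<or> Sop Bt a b c d = 0")
    case False
    then have "(k i \<noteq> k j) = (k p \<noteq> k q)" "(l a \<noteq> l b) = (l c \<noteq> l d)"
      using eB Sop_parity[OF eBt] unfolding even_idempotent_def by metis+
    then have signs: "((k p \<noteq> k q) \<and> (l c = l d)) = ((k i \<noteq> k j) \<and> (l a = l b))" by blast
    have r1: "sc (Sop Bt a b c d) * X * sc (B p q i j) = X * sc (B p q i j * Sop Bt a b c d)"
      and r2: "s * sc (B p q i j) * M i a * M j b * sc (Sop Bt a b c d)
        = s * (M i a * M j b * sc (B p q i j * Sop Bt a b c d))" for X s
      using sc_mult_sc[of "Sop Bt a b c d" X "B p q i j"]
        sc_mult_sc[of "B p q i j" "M i a * M j b" "Sop Bt a b c d"]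
      by (simp_all add: mult.commute[of "Sop Bt a b c d"] mult.assoc)
    have "gaut.twist (k i) (M i a) = sgnb (k i \<and> (k i \<noteq> l a)) * M i a"
      and t: "gaut.twist (k j) (M j b) = sgnb (k j \<and> (k j \<noteq> l b)) * M j b"
      using hM by (simp_all add: twist_homog)
    moreover have "gaut.twist (k i) (gaut.twist (k j) (M j b))
        = sgnb (k i \<and> (k j \<noteq> l b)) * gaut.twist (k j) (M j b)"
      using hM by (intro twist_homog homog_twist) simp
    ultimately show ?thesis unfolding signs r1 r2 t
      by (cases "k i"; cases "k j"; cases "l a"; cases "l b") (simp_all add: mult.assoc)
  qed auto
  then show ?thesis
    unfolding manin_entry_def sum_distrib_right sum_distrib_left by simp
qed

lemma manin_iff_Xi_morphism:
  fixes B :: "'i::finite \<Rightarrow> 'i \<Rightarrow> 'i \<Rightarrow> 'i \<Rightarrow> 'k" and Bt :: "'j::finite \<Rightarrow> 'j \<Rightarrow> 'j \<Rightarrow> 'j \<Rightarrow> 'k"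
    and k :: "'i \<Rightarrow> bool" and l :: "'j \<Rightarrow> bool" and M :: "'i \<Rightarrow> 'j \<Rightarrow> 'r"
  assumes eB: "even_idempotent k B" and eBt: "even_idempotent l Bt"
    and hM: "\<forall>i a. homog Ev Od (k i \<noteq> l a) (M i a)"
  shows "(\<forall>s t c d. manin_entry sc k l B Bt M s t c d = 0) \<longleftrightarrow>
    (\<exists>F. qa_morphism l (st_ideal id l (Xi_rels id id l Bt)) sc Ev Od k (st_ideal \<sigma> k (Xi_rels sc \<sigma> k B)) F \<and>
      (\<forall>a. F (st_gen a) - (\<Sum>i\<in>UNIV. st_mult \<sigma> k (st_gen i) (st_scal (M i a)))
        \<in> st_ideal \<sigma> k (Xi_rels sc \<sigma> k B)))"
proof -
  let ?J = "st_ideal \<sigma> k (Xi_rels sc \<sigma> k B)"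
  let ?C = "\<lambda>v a b. Sop Bt a b (fst v) (snd v)"
  let ?z = "\<lambda>a i. gaut.twist (k i) (M i a)"
  have "(\<exists>F. qa_morphism l (st_ideal id l (Xi_rels id id l Bt)) sc Ev Od k ?J F \<and>
      (\<forall>a. F (st_gen a) - (\<Sum>i\<in>UNIV. st_mult \<sigma> k (st_gen i) (st_scal (M i a))) \<in> ?J))
      \<longleftrightarrow> (\<forall>v. st_quadratic sc \<sigma> k (?C v) (st_lin ?z) \<in> ?J)"
    unfolding gaut.sum_st_gen_st_scal Xi_rels_eq_range_st_quadratic[of id id l Bt]
  proof (rule quadratic_morphism_iff)
    show "homog Ev Od (l a \<noteq> k i) (?z a i)" for a i
    proof -
      have "homog Ev Od (k i \<noteq> l a) (?z a i)" using hM by (simp add: homog_twist)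
      moreover have "(k i \<noteq> l a) = (l a \<noteq> k i)" by blast
      ultimately show ?thesis by simp
    qed
  qed
  also have "\<dots> \<longleftrightarrow> (\<forall>v w. (\<Sum>i\<in>UNIV. \<Sum>j\<in>UNIV. (\<Sum>a\<in>UNIV. \<Sum>b\<in>UNIV.
      sc (?C v a b) * (?z a i * gaut.twist (k i) (?z b j))) * sc (B (fst w) (snd w) i j)) = 0)"
    unfolding gaut.st_quadratic_st_lin Xi_rels_eq_range_st_quadratic
  proof (intro all_cong1 st_deg2_mem_quadratic_ideal_iff)
    show "(\<Sum>a\<in>UNIV. \<Sum>b\<in>UNIV. Sop B a b (fst u) (snd u) * B (fst w) (snd w) a b) = 0" for u w
      using even_idempotent_mult_Sop[OF eB] by (simp add: mult.commute)
    show "B (fst w) (snd w) a b \<noteq> 0 \<Longrightarrow> (k a \<noteq> k b) = (k (fst w) \<noteq> k (snd w))" for w a b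
      using eB unfolding even_idempotent_def by metis
  qed (rule Sop_resolution)
  also have "\<dots> \<longleftrightarrow> (\<forall>s t c d. manin_entry sc k l B Bt M s t c d = 0)"
    by (auto simp: manin_entry_eq_Xi_annihilator[OF eB eBt hM] sgnb_def)
  finally show ?thesis by blast
qed

end

theorem mainTheorem14:
  fixes B :: "'i::finite \<Rightarrow> 'i \<Rightarrow> 'i \<Rightarrow> 'i \<Rightarrow> 'k::field"
    and Bt :: "'j::finite \<Rightarrow> 'j \<Rightarrow> 'j \<Rightarrow> 'j \<Rightarrow> 'k"
    and k :: "'i \<Rightarrow> bool" and l :: "'j \<Rightarrow> bool"
    and sc :: "'k \<Rightarrow> 'r::ring_1" and Ev Od :: "'r set"
    and M :: "'i \<Rightarrow> 'j \<Rightarrow> 'r"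
  assumes "infinite (UNIV :: 'k set)" and "(2::'k) \<noteq> 0"
    and "even_idempotent k B" and "even_idempotent l Bt"
    and "super_algebra sc Ev Od"
    and "\<forall>i a. homog Ev Od (k i \<noteq> l a) (M i a)"
  shows "((\<forall>s t c d. (\<Sum>i\<in>UNIV. \<Sum>j\<in>UNIV. \<Sum>a\<in>UNIV. \<Sum>b\<in>UNIV.
              sgnb ((k i \<noteq> l a) \<and> k j) * sc (B s t i j) * M i a * M j b * sc (Sop Bt a b c d)) = 0)
          \<longleftrightarrow>
          (\<exists>F. qa_morphism k (st_ideal id k (X_rels id id k B)) sc Ev Od l
                 (st_ideal (gaut Ev Od) l (X_rels sc (gaut Ev Od) l Bt)) F \<and>
               (\<forall>i. F (st_gen i) - (\<Sum>a\<in>UNIV. st_mult (gaut Ev Od) l (st_scal (M i a)) (st_gen a))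
                      \<in> st_ideal (gaut Ev Od) l (X_rels sc (gaut Ev Od) l Bt))))
       \<and> ((\<forall>s t c d. (\<Sum>i\<in>UNIV. \<Sum>j\<in>UNIV. \<Sum>a\<in>UNIV. \<Sum>b\<in>UNIV.
              sgnb ((k i \<noteq> l a) \<and> k j) * sc (B s t i j) * M i a * M j b * sc (Sop Bt a b c d)) = 0)
          \<longleftrightarrow>
          (\<exists>F. qa_morphism l (st_ideal id l (Xi_rels id id l Bt)) sc Ev Od k
                 (st_ideal (gaut Ev Od) k (Xi_rels sc (gaut Ev Od) k B)) F \<and>
               (\<forall>a. F (st_gen a) - (\<Sum>i\<in>UNIV. st_mult (gaut Ev Od) k (st_gen i) (st_scal (M i a)))
                      \<in> st_ideal (gaut Ev Od) k (Xi_rels sc (gaut Ev Od) k B))))"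
proof -
  interpret super_alg sc Ev Od by (rule super_alg.intro) fact
  show ?thesis
    using manin_iff_X_morphism[OF assms(4,6)] manin_iff_Xi_morphism[OF assms(3,4,6)]
    unfolding manin_entry_def by blast
qed

end
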